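(* Let $K\subseteq\mathbb{R}^d$ be a convex body, $\varepsilon>0$ and $i\in I^\pm$. For every $t>0$ there exists a set $P_i$ of $O(1/t)$ augmented points of $\overline{\partial}K_i^*$ that stabs every useful $t$-large $\varepsilon$-cap of $K_i^*$. The constant in $O$ depends only on $d$.
   Context: For a unit vector $u$, $H^+(u)$ is the closed supporting halfspace of $K$ with outer normal $u$. Let $e_1,\dots,e_d$ be the coordinate unit vectors, $e_{-j}=-e_j$, $I^\pm=\{\pm1,\dots,\pm d\}$, $V_i=\{u\in\mathbb{S}^{d-1}:\langle u,e_i\rangle\ge\langle u,e_j\rangle\ \forall j\in I^\pm,j\ne i\}$, $S_i=\bigcap_{u\in V_i}H^+(u)$. Fix $i$ and use orthonormal coordinates $(x_1,\dots,x_{d-1},y)$ in which $e_i$ is the upward $y$-direction and the $x$-coordinates are the remaining original coordinates (up to sign); $S^\downarrow$ is orthogonal projection onto $\{y=0\}\cong\mathbb{R}^{d-1}$ and $\mathrm{area}$ of subsets there is $(d-1)$-dimensional measure; $S\pm\varepsilon$ is vertical translation. $K^\downarrow\oplus\alpha$ is the set of points of $\{y=0\}$ within distance $\alpha$ of $K^\downarrow$; $K_i^{(\alpha)}=\{x\in S_i:x^\downarrow\in K^\downarrow\oplus\alpha\}$, $K_i=K_i^{(2\varepsilon)}$. For a closed convex set $U$ in which every upward vertical ray from a boundary point lies in $U$ (U-shaped), $\overline{\partial}U$ is the set of boundary points with a non-vertical supporting hyperplane, each augmented by a choice $h(q)$ of such a hyperplane. The projective dual of a point $p$ is the hyperplane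 $p^*:y=\sum_{j=1}^{d-1}p_jx_j-p_d$ (with $p^{**}=p$); $K_i^*$ is the intersection of the closed upper halfspaces of $q^*$ for $q\in\overline{\partial}K_i$. The augmented point $q\in\overline{\partial}K_i$ with hyperplane $h(q)$ corresponds to $h(q)^*\in\overline{\partial}K_i^*$ with supporting hyperplane $q^*$. The $\varepsilon$-cap $\mathrm{Cap}_\varepsilon(p)(K_i^* )$ is the set of augmented points of $\overline{\partial}K_i^*$ in the closed lower halfspace of $h(p)+\varepsilon$; its base is $\mathrm{CBase}_\varepsilon(p)=(h(p)+\varepsilon)\cap K_i^*$. The cap is useful if $p$ corresponds to a point $q\in\overline{\partial}K_i$ lying on the lower boundary of $K_i^{(\varepsilon)}$, and $t$-large if $\mathrm{area}(\mathrm{CBase}_\varepsilon(p)^\downarrow)\ge t$. A set stabs a collection of caps if each cap contains at least one of its points. *)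

theory Defs
  imports "HOL-Analysis.Analysis"
begin

text \<open>Ambient space: real^'n, d = CARD('n). Signed indices I^pm are pairs (j, b):
  (j, True) stands for +j, (j, False) for -j.\<close>

definition sunit :: "'n::finite \<times> bool \<Rightarrow> real^'n" where
  "sunit i = (if snd i then 1 else -1) *\<^sub>R axis (fst i) 1"

definition Vdir :: "'n::finite \<times> bool \<Rightarrow> (real^'n) set" where
  "Vdir i = {u. norm u = 1 \<and> (\<forall>k. k \<noteq> i \<longrightarrow> u \<bullet> sunit k \<le> u \<bullet> sunit i)}"

definition supp_fun :: "(real^'n::finite) set \<Rightarrow> real^'n \<Rightarrow> real" where
  "supp_fun K u = Sup ((\<lambda>k. k \<bullet> u) ` K)"

definition Hplus :: "(real^'n::finite) set \<Rightarrow> real^'n \<Rightarrow> (real^'n) set" where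
  "Hplus K u = {x. x \<bullet> u \<le> supp_fun K u}"

definition Sset :: "(real^'n::finite) set \<Rightarrow> 'n \<times> bool \<Rightarrow> (real^'n) set" where
  "Sset K i = (\<Inter>u\<in>Vdir i. Hplus K u)"

text \<open>Upward vertical direction of the coordinate system attached to i,
  height y and projection onto the hyperplane {y = 0} (points of real^'n with zero
  (fst i)-th coordinate).\<close>
definition upv :: "'n::finite \<times> bool \<Rightarrow> real^'n" where
  "upv i = - sunit i"

definition hgt :: "'n::finite \<times> bool \<Rightarrow> real^'n \<Rightarrow> real" where
  "hgt i z = z \<bullet> upv i"

definition hor :: "'n::finite \<times> bool \<Rightarrow> real^'n \<Rightarrow> real^'n" where
  "hor i z = z - (z $ fst i) *\<^sub>R axis (fst i) 1"

text \<open>(d-1)-dimensional Lebesgue measure on the hyperplane {y = 0}.\<close>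
definition area :: "'n::finite \<times> bool \<Rightarrow> (real^'n) set \<Rightarrow> ennreal" where
  "area i A = emeasure (completion (PiM (- {fst i}) (\<lambda>_. lborel)))
                ((\<lambda>z. restrict (\<lambda>k. z $ k) (- {fst i})) ` A)"

text \<open>Projective dual hyperplane p^*: y = sum_j p_j x_j - p_d.\<close>
definition dualh :: "'n::finite \<times> bool \<Rightarrow> real^'n \<Rightarrow> (real^'n) set" where
  "dualh i p = {z. hgt i z = hor i p \<bullet> hor i z - hgt i p}"

definition uhalf :: "'n::finite \<times> bool \<Rightarrow> real^'n \<Rightarrow> (real^'n) set" where
  "uhalf i p = {z. hor i p \<bullet> hor i z - hgt i p \<le> hgt i z}"

text \<open>Dual point of a non-vertical hyperplane H (so that H = (dualpt i H)^*).\<close>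
definition dualpt :: "'n::finite \<times> bool \<Rightarrow> (real^'n) set \<Rightarrow> real^'n" where
  "dualpt i H = (THE p. H = dualh i p)"

definition nbhd :: "(real^'n::finite) set \<Rightarrow> 'n \<times> bool \<Rightarrow> real \<Rightarrow> (real^'n) set" where
  "nbhd K i \<alpha> = {w. w $ fst i = 0 \<and> (\<exists>k\<in>K. dist w (hor i k) \<le> \<alpha>)}"

definition Kal :: "(real^'n::finite) set \<Rightarrow> 'n \<times> bool \<Rightarrow> real \<Rightarrow> (real^'n) set" where
  "Kal K i \<alpha> = {z \<in> Sset K i. hor i z \<in> nbhd K i \<alpha>}"

definition Kmain :: "(real^'n::finite) set \<Rightarrow> 'n \<times> bool \<Rightarrow> real \<Rightarrow> (real^'n) set" where
  "Kmain K i \<epsilon> = Kal K i (2 * \<epsilon>)"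

definition supports :: "(real^'n::finite) set \<Rightarrow> real^'n \<Rightarrow> (real^'n) set \<Rightarrow> bool" where
  "supports U q H \<longleftrightarrow> q \<in> U \<and> q \<in> H \<and>
     (\<exists>a b. a \<noteq> 0 \<and> H = {x. a \<bullet> x = b} \<and> (\<forall>u\<in>U. a \<bullet> u \<le> b))"

text \<open>Augmented boundary: boundary points paired with a non-vertical supporting hyperplane.\<close>
definition ovbd :: "'n::finite \<times> bool \<Rightarrow> (real^'n) set \<Rightarrow> ((real^'n) \<times> (real^'n) set) set" where
  "ovbd i U = {(q, H). q \<in> frontier U \<and> (\<exists>p. H = dualh i p) \<and> supports U q H}"

definition Kdual :: "(real^'n::finite) set \<Rightarrow> 'n \<times> bool \<Rightarrow> real \<Rightarrow> (real^'n) set" where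
  "Kdual K i \<epsilon> = (\<Inter>qH\<in>ovbd i (Kmain K i \<epsilon>). uhalf i (fst qH))"

definition vshift :: "'n::finite \<times> bool \<Rightarrow> real \<Rightarrow> (real^'n) set \<Rightarrow> (real^'n) set" where
  "vshift i e S = (\<lambda>z. z + e *\<^sub>R upv i) ` S"

definition lowerhalf :: "'n::finite \<times> bool \<Rightarrow> (real^'n) set \<Rightarrow> (real^'n) set" where
  "lowerhalf i H = {z. \<exists>w\<in>H. hor i w = hor i z \<and> hgt i z \<le> hgt i w}"

definition lowbd :: "'n::finite \<times> bool \<Rightarrow> (real^'n) set \<Rightarrow> (real^'n) set" where
  "lowbd i A = {z \<in> A. \<forall>s>0. z - s *\<^sub>R upv i \<notin> A}"

definition Cap :: "'n::finite \<times> bool \<Rightarrow> (real^'n) set \<Rightarrow> real \<Rightarrow> (real^'n) \<times> (real^'n) set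
                    \<Rightarrow> ((real^'n) \<times> (real^'n) set) set" where
  "Cap i U e pH = {rG \<in> ovbd i U. fst rG \<in> lowerhalf i (vshift i e (snd pH))}"

definition CBase :: "'n::finite \<times> bool \<Rightarrow> (real^'n) set \<Rightarrow> real \<Rightarrow> (real^'n) \<times> (real^'n) set
                    \<Rightarrow> (real^'n) set" where
  "CBase i U e pH = vshift i e (snd pH) \<inter> U"

definition useful :: "(real^'n::finite) set \<Rightarrow> 'n \<times> bool \<Rightarrow> real \<Rightarrow> (real^'n) \<times> (real^'n) set \<Rightarrow> bool" where
  "useful K i \<epsilon> pH \<longleftrightarrow> (\<exists>(q, G)\<in>ovbd i (Kmain K i \<epsilon>).
      fst pH = dualpt i G \<and> snd pH = dualh i q \<and> q \<in> lowbd i (Kal K i \<epsilon>))"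

definition large :: "(real^'n::finite) set \<Rightarrow> 'n \<times> bool \<Rightarrow> real \<Rightarrow> real \<Rightarrow> (real^'n) \<times> (real^'n) set \<Rightarrow> bool" where
  "large K i \<epsilon> t pH \<longleftrightarrow> ennreal t \<le> area i (hor i ` CBase i (Kdual K i \<epsilon>) \<epsilon> pH)"

end

theory Submission
  imports Defs
begin

text \<open>Let \<open>pH\<close> carry a useful \<open>t\<close>-large cap of \<open>K\<^sub>i\<^sup>*\<close>. The shadow \<open>D\<close> of its base is a convex
  set of area at least \<open>t\<close>, so the centroid \<open>c\<close> of a simplex of maximal volume in \<open>D\<close> is a
  centre of \<open>1/d\<close>-symmetry of \<open>D\<close>. Let \<open>x\<close> be the midpoint of \<open>p\<close> and of the base point above
  \<open>c\<close>. Convexity gives a set \<open>T\<close> of volume \<open>\<ge> c\<^sub>d \<epsilon> t\<close> with \<open>x \<plusminus> T \<subseteq> K\<^sub>i\<^sup>*\<close>, and every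
  \<open>y \<in> K\<^sub>i\<^sup>*\<close> with \<open>2x - y \<in> K\<^sub>i\<^sup>*\<close> lies below the cap. The regions \<open>R = x + T/3\<close> lie in a
  vertical slab of thickness \<open>\<epsilon>\<close> above the lower boundary of \<open>K\<^sub>i\<^sup>*\<close> and, by the dual
  constraints coming from \<open>K\<^sub>i\<close>, inside the cylinder \<open>|x\<^sub>k| \<le> 3\<close>; hence pairwise disjoint
  regions number \<open>O(1/t)\<close>. Take a maximal disjoint family and, for each of its caps, the point
  of the augmented boundary directly below its \<open>x\<close>. If the regions of two caps \<open>a\<close>, \<open>b\<close>
  meet, then \<open>2x\<^sub>a - x\<^sub>b \<in> K\<^sub>i\<^sup>*\<close>, so the point below \<open>x\<^sub>b\<close> lies in the cap of \<open>a\<close>.\<close>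

section \<open>Vertical coordinates\<close>

lemma upv_axis: "upv i = (if snd i then -1 else 1) *\<^sub>R axis (fst i) 1"
  by (simp add: upv_def sunit_def)

lemma upv_nth: "upv i $ k = (if k = fst i then (if snd i then -1 else 1) else 0)"
  by (simp add: upv_axis axis_def)

lemma norm_upv [simp]: "norm (upv i) = 1"
  by (simp add: upv_axis)

lemma hor_nth: "hor i z $ k = (if k = fst i then 0 else z $ k)"
  by (simp add: hor_def axis_def)

lemma hgt_eq_nth: "hgt i z = (if snd i then - (z $ fst i) else z $ fst i)"
  by (simp add: hgt_def upv_axis inner_axis)

lemma hgt_upv [simp]: "hgt i (upv i) = 1"
  by (simp add: hgt_eq_nth upv_nth)

lemma hor_upv [simp]: "hor i (upv i) = 0"
  by (simp add: vec_eq_iff hor_nth upv_nth)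

lemma hgt_hor [simp]: "hgt i (hor i z) = 0"
  by (simp add: hgt_eq_nth hor_nth)

lemma hor_hor [simp]: "hor i (hor i z) = hor i z"
  by (simp add: vec_eq_iff hor_nth)

lemma hor_nth_fst [simp]: "hor i z $ fst i = 0"
  by (simp add: hor_nth)

lemma hor_eq_self: "z $ fst i = 0 \<Longrightarrow> hor i z = z"
  by (simp add: vec_eq_iff hor_nth)

lemma linear_hor: "linear (hor i)"
  by (auto simp: linear_iff vec_eq_iff hor_nth)

lemma hor_add [simp]: "hor i (x + y) = hor i x + hor i y"
  and hor_diff [simp]: "hor i (x - y) = hor i x - hor i y"
  and hor_scaleR [simp]: "hor i (c *\<^sub>R x) = c *\<^sub>R hor i x"
  and hor_minus [simp]: "hor i (- x) = - hor i x"
  and hor_zero [simp]: "hor i 0 = 0"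
  using linear_hor[of i] by (simp_all add: linear_add linear_diff linear_scale linear_neg linear_0)

lemma hgt_add [simp]: "hgt i (x + y) = hgt i x + hgt i y"
  and hgt_diff [simp]: "hgt i (x - y) = hgt i x - hgt i y"
  and hgt_scaleR [simp]: "hgt i (c *\<^sub>R x) = c * hgt i x"
  and hgt_minus [simp]: "hgt i (- x) = - hgt i x"
  and hgt_zero [simp]: "hgt i 0 = 0"
  by (simp_all add: hgt_def inner_add_left inner_diff_left)

lemma hor_plus_hgt: "hor i z + hgt i z *\<^sub>R upv i = z"
  by (simp add: vec_eq_iff hor_nth hgt_eq_nth upv_nth)

lemma vec_eq_hor_hgtI: "hor i x = hor i y \<Longrightarrow> hgt i x = hgt i y \<Longrightarrow> x = y"
  by (metis hor_plus_hgt)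

lemma inner_hor_hgt: "a \<bullet> z = hor i a \<bullet> hor i z + hgt i a * hgt i z"
proof -
  have "a \<bullet> z = (hor i a + hgt i a *\<^sub>R upv i) \<bullet> (hor i z + hgt i z *\<^sub>R upv i)"
    by (simp add: hor_plus_hgt)
  also have "\<dots> = hor i a \<bullet> hor i z + hgt i a * hgt i z"
    by (simp add: inner_add_left inner_add_right inner_commute[of "upv i"] flip: hgt_def)
  finally show ?thesis .
qed

lemma inner_hor_left: "hor i p \<bullet> hor i z = hor i p \<bullet> z"
  using inner_hor_hgt[of "hor i p" z i] by simp

lemma continuous_on_hor [continuous_intros]: "continuous_on S (hor i)"
  unfolding hor_def by (intro continuous_intros)

lemma isCont_hor [continuous_intros]: "isCont (hor i) z"
  unfolding hor_def by (intro continuous_intros)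

section \<open>The sets \<open>S\<^sub>i\<close> and \<open>K\<^sub>i\<close>\<close>

lemma inner_sunit: "v \<bullet> sunit k = (if snd k then v $ fst k else - (v $ fst k))"
  by (simp add: sunit_def inner_axis)

lemma sunit_in_Vdir: "sunit i \<in> Vdir i"
proof -
  have "sunit i \<bullet> sunit k \<le> 1" "sunit i \<bullet> sunit i = 1" "norm (sunit i) = 1" for k
    by (simp_all add: inner_sunit sunit_def axis_nth inner_axis_axis)
  then show ?thesis by (simp add: Vdir_def)
qed

lemma Vdir_abs_nth_le:
  assumes "v \<in> Vdir i" "k \<noteq> fst i"
  shows "\<bar>v $ k\<bar> \<le> v \<bullet> sunit i"
proof -
  have "v \<bullet> sunit (k, True) \<le> v \<bullet> sunit i" "v \<bullet> sunit (k, False) \<le> v \<bullet> sunit i"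
    using assms by (auto simp: Vdir_def)
  then show ?thesis by (simp add: inner_sunit)
qed

lemma Vdir_inner_sunit_nonneg:
  assumes "v \<in> Vdir i"
  shows "0 \<le> v \<bullet> sunit i"
proof -
  have "v \<bullet> sunit (fst i, \<not> snd i) \<le> v \<bullet> sunit i"
    using assms by (cases i) (auto simp: Vdir_def)
  then show ?thesis by (cases i) (auto simp: inner_sunit)
qed

lemma Sset_hgt_ge: "z \<in> Sset K i \<Longrightarrow> - supp_fun K (sunit i) \<le> hgt i z"
  using sunit_in_Vdir[of i] by (auto simp: Sset_def Hplus_def hgt_def upv_def)

text \<open>Each normal \<open>u \<in> V\<^sub>i\<close> has \<open>|u\<^sub>k| \<le> \<langle>u, sunit i\<rangle> = - \<langle>u, upv i\<rangle>\<close>, so climbing by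
  the \<open>\<ell>\<^sub>1\<close>-length of a horizontal move compensates what the move gains against \<open>u\<close>.\<close>
lemma Sset_climb:
  assumes z: "z \<in> Sset K i" and h: "h $ fst i = 0" and c: "(\<Sum>k\<in>UNIV. \<bar>h $ k\<bar>) \<le> c"
  shows "z + h + c *\<^sub>R upv i \<in> Sset K i"
  unfolding Sset_def Hplus_def
proof (intro InterI, clarsimp)
  fix v assume v: "v \<in> Vdir i"
  define m where "m = v \<bullet> sunit i"
  have m0: "0 \<le> m" using Vdir_inner_sunit_nonneg[OF v] by (simp add: m_def)
  have "h \<bullet> v = (\<Sum>k\<in>UNIV. h $ k * v $ k)" by (simp add: inner_vec_def)
  also have "\<dots> \<le> (\<Sum>k\<in>UNIV. \<bar>h $ k\<bar> * m)"
  proof (rule sum_mono)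
    fix k
    have "\<bar>h $ k * v $ k\<bar> \<le> \<bar>h $ k\<bar> * m"
      using h m0 Vdir_abs_nth_le[OF v, of k] by (cases "k = fst i") (auto simp: abs_mult m_def mult_left_mono)
    then show "h $ k * v $ k \<le> \<bar>h $ k\<bar> * m" by linarith
  qed
  also have "\<dots> \<le> c * m" using c m0 by (simp add: mult_right_mono flip: sum_distrib_right)
  finally have "h \<bullet> v \<le> c * m" .
  moreover have "upv i \<bullet> v = - m" by (simp add: upv_def m_def inner_commute)
  moreover have "z \<bullet> v \<le> supp_fun K v" using z v by (auto simp: Sset_def Hplus_def)
  ultimately show "(z + h + c *\<^sub>R upv i) \<bullet> v \<le> supp_fun K v"
    by (simp add: inner_add_left)
qed

lemma closed_Sset: "closed (Sset K i)"
  unfolding Sset_def Hplus_def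
  by (intro closed_INT ballI) (simp add: closed_halfspace_le inner_commute)

lemma convex_Sset: "convex (Sset K i)"
  unfolding Sset_def Hplus_def
  by (intro convex_INT ballI) (simp add: convex_halfspace_le inner_commute)

lemma nbhd_mono: "\<alpha> \<le> \<beta> \<Longrightarrow> nbhd K i \<alpha> \<subseteq> nbhd K i \<beta>"
  by (force simp: nbhd_def)

lemma nbhd_add_horizontal:
  assumes "w \<in> nbhd K i \<alpha>" "h $ fst i = 0" "norm h \<le> \<beta>"
  shows "w + h \<in> nbhd K i (\<alpha> + \<beta>)"
proof -
  obtain k where k: "k \<in> K" "dist w (hor i k) \<le> \<alpha>" and w: "w $ fst i = 0"
    using assms(1) by (auto simp: nbhd_def)
  have "dist (w + h) (hor i k) \<le> dist w (hor i k) + norm h"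
    by (simp add: dist_norm) (metis add.commute add_diff_eq diff_add_eq norm_triangle_ineq)
  then show ?thesis using k w assms(2,3) by (force simp: nbhd_def)
qed

lemma closed_nbhd:
  assumes "compact K"
  shows "closed (nbhd K i \<alpha>)"
proof -
  have "{w. \<exists>k\<in>K. dist w (hor i k) \<le> \<alpha>} = {x + y | x y. x \<in> hor i ` K \<and> y \<in> cball 0 \<alpha>}"
  proof (intro set_eqI iffI)
    fix w assume "w \<in> {w. \<exists>k\<in>K. dist w (hor i k) \<le> \<alpha>}"
    then obtain k where "k \<in> K" "dist w (hor i k) \<le> \<alpha>" by auto
    then have "w - hor i k \<in> cball 0 \<alpha>" "hor i k \<in> hor i ` K" "w = hor i k + (w - hor i k)"
      using norm_minus_commute[of "hor i k" w] by (auto simp: dist_norm)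
    then show "w \<in> {x + y | x y. x \<in> hor i ` K \<and> y \<in> cball 0 \<alpha>}" by blast
  qed (force simp: dist_norm)
  moreover have "compact {x + y | x y. x \<in> hor i ` K \<and> y \<in> cball 0 \<alpha>}"
    using compact_sums[OF compact_continuous_image[OF continuous_on_hor assms] compact_cball] by blast
  ultimately have "closed {w. \<exists>k\<in>K. dist w (hor i k) \<le> \<alpha>}"
    by (simp add: compact_imp_closed)
  moreover have "{w::real^'a. w $ fst i = 0} = {w. axis (fst i) 1 \<bullet> w = 0}"
    by (simp add: inner_axis')
  then have "closed {w::real^'a. w $ fst i = 0}"
    using closed_hyperplane[of "axis (fst i) 1" 0] by simp
  ultimately show ?thesis
    by (simp add: nbhd_def Collect_conj_eq closed_Int)
qed

lemma convex_nbhd: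
  assumes "convex K"
  shows "convex (nbhd K i \<alpha>)"
  unfolding convex_def
proof (intro ballI allI impI)
  fix x y and u v :: real
  assume x: "x \<in> nbhd K i \<alpha>" and y: "y \<in> nbhd K i \<alpha>" and uv: "0 \<le> u" "0 \<le> v" "u + v = 1"
  obtain k1 where k1: "k1 \<in> K" "norm (x - hor i k1) \<le> \<alpha>" "x $ fst i = 0"
    using x by (auto simp: nbhd_def dist_norm)
  obtain k2 where k2: "k2 \<in> K" "norm (y - hor i k2) \<le> \<alpha>" "y $ fst i = 0"
    using y by (auto simp: nbhd_def dist_norm)
  have k: "u *\<^sub>R k1 + v *\<^sub>R k2 \<in> K" using assms k1 k2 uv by (auto simp: convex_def)
  have "dist (u *\<^sub>R x + v *\<^sub>R y) (hor i (u *\<^sub>R k1 + v *\<^sub>R k2))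
      = norm (u *\<^sub>R (x - hor i k1) + v *\<^sub>R (y - hor i k2))"
    by (simp add: dist_norm algebra_simps)
  also have "\<dots> \<le> norm (u *\<^sub>R (x - hor i k1)) + norm (v *\<^sub>R (y - hor i k2))"
    by (rule norm_triangle_ineq)
  also have "\<dots> = u * norm (x - hor i k1) + v * norm (y - hor i k2)"
    using uv by simp
  also have "\<dots> \<le> u * \<alpha> + v * \<alpha>"
    using uv k1 k2 by (intro add_mono mult_left_mono) auto
  also have "\<dots> = \<alpha>" using uv by (metis distrib_right mult_1)
  finally have "dist (u *\<^sub>R x + v *\<^sub>R y) (hor i (u *\<^sub>R k1 + v *\<^sub>R k2)) \<le> \<alpha>" .
  moreover have "(u *\<^sub>R x + v *\<^sub>R y) $ fst i = 0" using k1 k2 by simp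
  ultimately show "u *\<^sub>R x + v *\<^sub>R y \<in> nbhd K i \<alpha>"
    using k unfolding nbhd_def by blast
qed

lemma Kal_eq: "Kal K i \<alpha> = Sset K i \<inter> hor i -` nbhd K i \<alpha>"
  by (auto simp: Kal_def)

lemma closed_Kal: "compact K \<Longrightarrow> closed (Kal K i \<alpha>)"
  unfolding Kal_eq
  by (intro closed_Int closed_Sset continuous_closed_vimage closed_nbhd isCont_hor)

lemma convex_Kal: "convex K \<Longrightarrow> convex (Kal K i \<alpha>)"
  unfolding Kal_eq
  by (intro convex_Int convex_Sset convex_linear_vimage convex_nbhd linear_hor)

lemma Kal_climb: "z \<in> Kal K i \<alpha> \<Longrightarrow> 0 \<le> s \<Longrightarrow> z + s *\<^sub>R upv i \<in> Kal K i \<alpha>"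
  using Sset_climb[of z K i 0 s] by (simp add: Kal_def)

section \<open>Lowest points and the dual body\<close>

lemma hyperplane_eq_dualh:
  assumes "a \<bullet> upv i \<noteq> 0"
  shows "{x. a \<bullet> x = \<beta>} = dualh i (- (1 / (a \<bullet> upv i)) *\<^sub>R hor i a - (\<beta> / (a \<bullet> upv i)) *\<^sub>R upv i)"
proof -
  define \<kappa> where "\<kappa> = a \<bullet> upv i"
  have "a \<bullet> x = \<beta> \<longleftrightarrow> hgt i x = - (1 / \<kappa>) * (hor i a \<bullet> hor i x) + \<beta> / \<kappa>" for x
    using inner_hor_hgt[of a x i] assms by (auto simp: hgt_def \<kappa>_def field_simps)
  then show ?thesis
    by (auto simp: dualh_def \<kappa>_def[symmetric] inner_commute)
qed

lemma lowest_point_not_interior: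
  assumes "\<forall>s>0. w - s *\<^sub>R upv i \<notin> U"
  shows "w \<notin> interior U"
proof
  assume "w \<in> interior U"
  then obtain e where e: "e > 0" "ball w e \<subseteq> U" by (meson mem_interior)
  then have "w - (e/2) *\<^sub>R upv i \<in> U" by (auto simp: dist_norm)
  then show False using e assms by (meson half_gt_zero)
qed

text \<open>A lowest point lies on the relative boundary, so some hyperplane supports \<open>U\<close> there;
  the last hypothesis makes it non-vertical.\<close>
lemma lowest_point_in_ovbd:
  fixes U :: "(real^'n) set"
  assumes U: "convex U" and w: "w \<in> U" "w + upv i \<in> U" and low: "\<forall>s>0. w - s *\<^sub>R upv i \<notin> U"
    and not_vertical: "\<And>a. a \<noteq> 0 \<Longrightarrow> a \<bullet> upv i = 0 \<Longrightarrow> \<exists>y\<in>U. a \<bullet> y < a \<bullet> w"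
  shows "\<exists>H. (w, H) \<in> ovbd i U"
proof -
  have "w \<notin> rel_interior U"
  proof
    assume "w \<in> rel_interior U"
    then obtain e where "e > 1" "(1 - e) *\<^sub>R (w + upv i) + e *\<^sub>R w \<in> U"
      using convex_rel_interior_iff[OF U, of w] w by blast
    moreover have "(1 - e) *\<^sub>R (w + upv i) + e *\<^sub>R w = w - (e - 1) *\<^sub>R upv i"
      by (simp add: algebra_simps)
    ultimately show False using low by auto
  qed
  then obtain a where a: "a \<noteq> 0" "\<And>y. y \<in> U \<Longrightarrow> a \<bullet> w \<le> a \<bullet> y"
    using supporting_hyperplane_rel_boundary[OF U w(1)] by metis
  have "a \<bullet> upv i \<noteq> 0"
    using not_vertical[OF a(1)] a(2) by fastforce
  then have "\<exists>p. {x. a \<bullet> x = a \<bullet> w} = dualh i p"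
    using hyperplane_eq_dualh by blast
  moreover have "supports U w {x. a \<bullet> x = a \<bullet> w}"
    unfolding supports_def using w(1) a
    by (intro conjI exI[of _ "- a"] exI[of _ "- (a \<bullet> w)"]) auto
  moreover have "w \<in> frontier U"
    using lowest_point_not_interior[OF low] w(1) closure_subset by (auto simp: frontier_def)
  ultimately show ?thesis by (auto simp: ovbd_def)
qed

lemma lowest_point_exists:
  fixes U :: "(real^'n) set"
  assumes U: "closed U" and x: "x \<in> U" and bdd: "\<And>\<tau>. 0 \<le> \<tau> \<Longrightarrow> x - \<tau> *\<^sub>R upv i \<in> U \<Longrightarrow> \<tau> \<le> B"
  shows "\<exists>\<tau>\<ge>0. x - \<tau> *\<^sub>R upv i \<in> U \<and> (\<forall>s>0. x - (\<tau> + s) *\<^sub>R upv i \<notin> U)"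
proof -
  define S where "S = {\<tau>::real. 0 \<le> \<tau> \<and> x - \<tau> *\<^sub>R upv i \<in> U}"
  have "S = {0..} \<inter> (\<lambda>\<tau>. x - \<tau> *\<^sub>R upv i) -` U" by (auto simp: S_def)
  moreover have "closed ((\<lambda>\<tau>::real. x - \<tau> *\<^sub>R upv i) -` U)"
    by (intro continuous_closed_vimage U continuous_intros)
  ultimately have "closed S" by (simp add: closed_Int)
  moreover have "S \<noteq> {}" using x by (auto simp: S_def intro!: exI[of _ 0])
  moreover have "bdd_above S" using bdd by (auto simp: S_def bdd_above_def)
  ultimately have "Sup S \<in> S" by (intro closed_contains_Sup)
  moreover have "x - (Sup S + s) *\<^sub>R upv i \<notin> U" if "s > 0" for s
  proof
    assume "x - (Sup S + s) *\<^sub>R upv i \<in> U"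
    then have "Sup S + s \<in> S" using \<open>Sup S \<in> S\<close> that by (simp add: S_def)
    then show False using cSup_upper[OF _ \<open>bdd_above S\<close>] that by fastforce
  qed
  ultimately show ?thesis by (auto simp: S_def)
qed

lemma inner_hor_minus_upv: "(hor i p - upv i) \<bullet> z = hor i p \<bullet> hor i z - hgt i z"
  by (simp add: inner_diff_left inner_diff_right inner_hor_left hgt_def inner_commute)

lemma uhalf_eq: "uhalf i p = {z. (hor i p - upv i) \<bullet> z \<le> hgt i p}"
  unfolding uhalf_def inner_hor_minus_upv by auto

lemma closed_uhalf: "closed (uhalf i p)"
  unfolding uhalf_eq by (rule closed_halfspace_le)

lemma convex_uhalf: "convex (uhalf i p)"
  unfolding uhalf_eq by (rule convex_halfspace_le)

lemma uhalf_antimono: "hor i z = hor i w \<Longrightarrow> hgt i w \<le> hgt i z \<Longrightarrow> uhalf i w \<subseteq> uhalf i z"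
  by (auto simp: uhalf_def)

lemma closed_Kdual: "closed (Kdual K i \<epsilon>)"
  unfolding Kdual_def by (intro closed_INT ballI closed_uhalf)

lemma convex_Kdual: "convex (Kdual K i \<epsilon>)"
  unfolding Kdual_def by (intro convex_INT ballI convex_uhalf)

lemma Kdual_climb: "z \<in> Kdual K i \<epsilon> \<Longrightarrow> 0 \<le> s \<Longrightarrow> z + s *\<^sub>R upv i \<in> Kdual K i \<epsilon>"
  by (auto simp: Kdual_def uhalf_def)

lemma Kdual_subset_uhalf: "(q, G) \<in> ovbd i (Kmain K i \<epsilon>) \<Longrightarrow> Kdual K i \<epsilon> \<subseteq> uhalf i q"
  unfolding Kdual_def by force

text \<open>Near a point whose shadow lies well inside \<open>K\<^sup>\<down> \<oplus> 2\<epsilon>\<close>, the set \<open>K\<^sub>i\<close> contains a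
  horizontal disc, so it has no vertical supporting hyperplane there.\<close>
lemma Kmain_not_vertically_supported:
  assumes w: "w \<in> Kmain K i \<epsilon>" "hor i w \<in> nbhd K i (3/2 * \<epsilon>)" and e: "\<epsilon> > 0"
    and a: "a \<noteq> 0" "a \<bullet> upv i = 0"
  shows "\<exists>y\<in>Kmain K i \<epsilon>. a \<bullet> y < a \<bullet> w"
proof -
  have ha: "hor i a \<noteq> 0"
    using hor_plus_hgt[of i a] a by (auto simp: hgt_def)
  define h where "h = - ((\<epsilon>/2) / norm (hor i a)) *\<^sub>R hor i a"
  have h0: "h $ fst i = 0" and nh: "norm h = \<epsilon>/2"
    using ha e by (auto simp: h_def)
  define y where "y = w + h + (\<Sum>k\<in>UNIV. \<bar>h $ k\<bar>) *\<^sub>R upv i"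
  have "y \<in> Sset K i"
    unfolding y_def using w h0 by (intro Sset_climb) (auto simp: Kmain_def Kal_def)
  moreover have "hor i y \<in> nbhd K i (3/2 * \<epsilon> + \<epsilon>/2)"
    using nbhd_add_horizontal[OF w(2) h0, of "\<epsilon>/2"] nh by (simp add: y_def hor_eq_self[OF h0])
  ultimately have "y \<in> Kmain K i \<epsilon>" by (simp add: Kmain_def Kal_def)
  moreover have "a \<bullet> h < 0"
    using inner_hor_hgt[of a h i] ha e by (simp add: h_def hor_eq_self[OF h0] hgt_def a(2))
  then have "a \<bullet> y < a \<bullet> w" using a(2) by (simp add: y_def inner_add_right)
  ultimately show ?thesis by blast
qed

text \<open>Dropping from \<open>z\<close> to the lowest point \<open>w\<close> of \<open>K\<^sub>i\<close> below it gives a point of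
  \<open>\<partial>\<^sup>-K\<^sub>i\<close>, and the dual constraint of \<open>w\<close> is at least as strong as that of \<open>z\<close>.\<close>
lemma Kdual_subset_uhalf_Sset:
  assumes K: "compact K" "convex K" and e: "\<epsilon> > 0"
    and z: "z \<in> Sset K i" "hor i z \<in> nbhd K i (3/2 * \<epsilon>)"
  shows "Kdual K i \<epsilon> \<subseteq> uhalf i z"
proof -
  let ?M = "Kmain K i \<epsilon>"
  have zM: "z \<in> ?M"
    using z nbhd_mono[of "3/2*\<epsilon>" "2*\<epsilon>" K i] e by (auto simp: Kmain_def Kal_def)
  obtain \<tau> where \<tau>: "\<tau> \<ge> 0" "z - \<tau> *\<^sub>R upv i \<in> ?M" "\<forall>s>0. z - (\<tau> + s) *\<^sub>R upv i \<notin> ?M"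
  proof -
    have "\<tau> \<le> hgt i z + supp_fun K (sunit i)" if "z - \<tau> *\<^sub>R upv i \<in> ?M" for \<tau>
      using Sset_hgt_ge[of "z - \<tau> *\<^sub>R upv i" K i] that by (simp add: Kmain_def Kal_def)
    then show ?thesis
      using lowest_point_exists[OF closed_Kal[OF K(1)] zM[unfolded Kmain_def]] that
      by (metis Kmain_def)
  qed
  define w where "w = z - \<tau> *\<^sub>R upv i"
  have "\<exists>H. (w, H) \<in> ovbd i ?M"
  proof (rule lowest_point_in_ovbd)
    show "convex ?M" unfolding Kmain_def by (rule convex_Kal[OF K(2)])
    show "w \<in> ?M" "w + upv i \<in> ?M"
      using \<tau> Kal_climb[of w K i "2 * \<epsilon>" 1] by (simp_all add: w_def Kmain_def)
    show "\<forall>s>0. w - s *\<^sub>R upv i \<notin> ?M"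
      using \<tau>(3) by (simp add: w_def algebra_simps)
    show "\<exists>y\<in>?M. a \<bullet> y < a \<bullet> w" if "a \<noteq> 0" "a \<bullet> upv i = 0" for a
      using Kmain_not_vertically_supported[OF _ _ e that] \<open>w \<in> ?M\<close> z(2) by (simp add: w_def)
  qed
  then obtain H where "(w, H) \<in> ovbd i ?M" by blast
  then have "Kdual K i \<epsilon> \<subseteq> uhalf i w" by (rule Kdual_subset_uhalf)
  also have "\<dots> \<subseteq> uhalf i z" using \<tau>(1) by (intro uhalf_antimono) (auto simp: w_def)
  finally show ?thesis .
qed

lemma lowerhalf_vshift_dualh:
  "lowerhalf i (vshift i e (dualh i q)) = {z. hgt i z \<le> hor i q \<bullet> hor i z - hgt i q + e}"
proof (intro set_eqI iffI)
  fix z assume "z \<in> lowerhalf i (vshift i e (dualh i q))"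
  then show "z \<in> {z. hgt i z \<le> hor i q \<bullet> hor i z - hgt i q + e}"
    by (auto simp: lowerhalf_def vshift_def dualh_def)
next
  fix z assume z: "z \<in> {z. hgt i z \<le> hor i q \<bullet> hor i z - hgt i q + e}"
  define w where "w = hor i z + (hor i q \<bullet> hor i z - hgt i q) *\<^sub>R upv i"
  have "w \<in> dualh i q" "hor i (w + e *\<^sub>R upv i) = hor i z" "hgt i z \<le> hgt i (w + e *\<^sub>R upv i)"
    using z by (auto simp: w_def dualh_def)
  then show "z \<in> lowerhalf i (vshift i e (dualh i q))"
    unfolding lowerhalf_def vshift_def by blast
qed

lemma vshift_dualh: "vshift i e (dualh i q) = {z. hgt i z = hor i q \<bullet> hor i z - hgt i q + e}"
proof (intro set_eqI iffI)
  fix z assume "z \<in> {z. hgt i z = hor i q \<bullet> hor i z - hgt i q + e}"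
  then have "z - e *\<^sub>R upv i \<in> dualh i q" by (auto simp: dualh_def)
  then show "z \<in> vshift i e (dualh i q)"
    unfolding vshift_def by (intro image_eqI[of _ _ "z - e *\<^sub>R upv i"]) auto
qed (auto simp: vshift_def dualh_def)

section \<open>Useful caps\<close>

locale useful_cap =
  fixes K :: "(real^'n) set" and \<epsilon> :: real and i :: "'n \<times> bool" and pH q G
  assumes K: "compact K" "convex K" and eps: "\<epsilon> > 0"
    and pH: "pH \<in> ovbd i (Kdual K i \<epsilon>)"
    and qG: "(q, G) \<in> ovbd i (Kmain K i \<epsilon>)" and snd_pH: "snd pH = dualh i q"
    and q_low: "q \<in> lowbd i (Kal K i \<epsilon>)"
begin

abbreviation "U \<equiv> Kdual K i \<epsilon>"

text \<open>The hyperplane \<open>q\<^sup>*\<close> is the graph of \<open>qstar\<close> over \<open>{y = 0}\<close>.\<close>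
definition qstar :: "real^'n \<Rightarrow> real" where
  "qstar s = hor i q \<bullet> s - hgt i q"

lemma qstar_le_hgt: "z \<in> U \<Longrightarrow> qstar (hor i z) \<le> hgt i z"
  using Kdual_subset_uhalf[OF qG] by (auto simp: uhalf_def qstar_def)

lemma p_in_U: "fst pH \<in> U"
  and hgt_p: "hgt i (fst pH) = qstar (hor i (fst pH))"
proof -
  have "fst pH \<in> U \<and> fst pH \<in> snd pH" using pH by (auto simp: ovbd_def supports_def)
  then show "fst pH \<in> U" "hgt i (fst pH) = qstar (hor i (fst pH))"
    using snd_pH by (auto simp: dualh_def qstar_def)
qed

lemma CBase_eq: "CBase i U \<epsilon> pH = {z \<in> U. hgt i z = qstar (hor i z) + \<epsilon>}"
  by (auto simp: CBase_def snd_pH vshift_dualh qstar_def)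

text \<open>The dual constraints of the points \<open>q \<plusminus> (\<epsilon>/2) e\<^sub>k + (\<epsilon>/2) upv i\<close> of \<open>S\<^sub>i\<close> bound
  the slopes in the cap.\<close>
lemma cap_abs_nth_le:
  assumes z: "z \<in> U" "hgt i z \<le> qstar (hor i z) + \<epsilon>" and k: "k \<noteq> fst i"
  shows "\<bar>z $ k\<bar> \<le> 3"
proof -
  have qK: "q \<in> Sset K i" "hor i q \<in> nbhd K i \<epsilon>"
    using q_low by (auto simp: lowbd_def Kal_def)
  have "\<sigma> * z $ k \<le> 3" if \<sigma>: "\<bar>\<sigma>\<bar> = 1" for \<sigma>
  proof -
    define h where "h = (\<sigma> * (\<epsilon>/2)) *\<^sub>R (axis k 1 :: real^'n)"
    have h0: "h $ fst i = 0" using k by (simp add: h_def axis_def)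
    have hh: "hor i h = h" by (rule hor_eq_self[OF h0])
    have nh: "norm h = \<epsilon>/2" using \<sigma> eps by (simp add: h_def abs_mult)
    have "(\<Sum>k'\<in>UNIV. \<bar>h $ k'\<bar>) = (\<Sum>k'\<in>UNIV. if k' = k then \<epsilon>/2 else 0)"
      using \<sigma> eps by (intro sum.cong) (auto simp: h_def axis_def abs_mult)
    then have sh: "(\<Sum>k'\<in>UNIV. \<bar>h $ k'\<bar>) = \<epsilon>/2" by simp
    define z' where "z' = q + h + (\<epsilon>/2) *\<^sub>R upv i"
    have "z' \<in> Sset K i" unfolding z'_def using qK(1) h0 sh by (intro Sset_climb) auto
    moreover have "hor i z' \<in> nbhd K i (3/2 * \<epsilon>)"
      using nbhd_add_horizontal[OF qK(2) h0, of "\<epsilon>/2"] nh by (simp add: z'_def hh)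
    ultimately have "z \<in> uhalf i z'" using Kdual_subset_uhalf_Sset[OF K eps] z(1) by blast
    moreover have "hgt i z' = hgt i q + \<epsilon>/2"
      using hgt_hor[of i h] by (simp add: z'_def hh)
    moreover have "hor i z' \<bullet> hor i z = hor i q \<bullet> hor i z + \<sigma> * (\<epsilon>/2) * z $ k"
    proof -
      have "hor i z' = hor i q + h" by (simp add: z'_def hh)
      moreover have "axis k 1 \<bullet> hor i z = z $ k" using k by (simp add: inner_axis' hor_nth)
      ultimately show ?thesis by (simp add: h_def inner_add_left)
    qed
    ultimately have "(\<epsilon>/2) * (\<sigma> * z $ k) \<le> (\<epsilon>/2) * 3"
      using z(2) by (simp add: uhalf_def qstar_def algebra_simps)
    then show ?thesis using eps by simp
  qed
  from this[of 1] this[of "-1"] show ?thesis by simp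
qed

lemma closed_CBase: "closed (CBase i U \<epsilon> pH)"
proof -
  have "CBase i U \<epsilon> pH = U \<inter> {z. hgt i z - (hor i q \<bullet> hor i z - hgt i q + \<epsilon>) = 0}"
    by (auto simp: CBase_eq qstar_def)
  moreover have "closed {z. hgt i z - (hor i q \<bullet> hor i z - hgt i q + \<epsilon>) = 0}"
    unfolding hgt_def by (intro closed_Collect_eq continuous_intros isCont_hor)
  ultimately show ?thesis by (simp add: closed_Int closed_Kdual)
qed

lemma bounded_CBase: "bounded (CBase i U \<epsilon> pH)"
proof -
  have nh: "norm (hor i z) \<le> 3 * real CARD('n)" if "z \<in> CBase i U \<epsilon> pH" for z
  proof -
    have "norm (hor i z) \<le> (\<Sum>k\<in>UNIV. \<bar>hor i z $ k\<bar>)" by (rule norm_le_l1_cart)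
    also have "\<dots> \<le> (\<Sum>k\<in>(UNIV::'n set). 3)"
      using that cap_abs_nth_le[of z] by (intro sum_mono) (auto simp: CBase_eq hor_nth)
    finally show ?thesis by simp
  qed
  have "norm z \<le> 3 * real CARD('n) + (norm (hor i q) * (3 * real CARD('n)) + \<bar>hgt i q\<bar> + \<epsilon>)"
    if z: "z \<in> CBase i U \<epsilon> pH" for z
  proof -
    have "\<bar>hor i q \<bullet> hor i z\<bar> \<le> norm (hor i q) * (3 * real CARD('n))"
      using Cauchy_Schwarz_ineq2[of "hor i q" "hor i z"] nh[OF z]
      by (meson mult_left_mono norm_ge_zero order_trans)
    moreover have "hgt i z = hor i q \<bullet> hor i z - hgt i q + \<epsilon>" using z by (auto simp: CBase_eq qstar_def)
    moreover have "norm z \<le> norm (hor i z) + \<bar>hgt i z\<bar>"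
      using norm_triangle_ineq[of "hor i z" "hgt i z *\<^sub>R upv i"] by (simp add: hor_plus_hgt)
    ultimately show ?thesis using nh[OF z] eps by linarith
  qed
  then show ?thesis unfolding bounded_iff by blast
qed

lemma convex_CBase: "convex (CBase i U \<epsilon> pH)"
proof -
  have "CBase i U \<epsilon> pH = U \<inter> {z. (hor i q - upv i) \<bullet> z = hgt i q - \<epsilon>}"
    by (auto simp: CBase_eq qstar_def inner_hor_minus_upv)
  then show ?thesis by (simp add: convex_Int convex_Kdual convex_hyperplane)
qed

definition shadow :: "(real^'n) set" where
  "shadow = hor i ` CBase i U \<epsilon> pH"

lemma compact_shadow: "compact shadow"
  unfolding shadow_def
  by (intro compact_continuous_image continuous_on_hor)
    (simp add: compact_eq_bounded_closed closed_CBase bounded_CBase)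

lemma convex_shadow: "convex shadow"
  unfolding shadow_def by (intro convex_linear_image linear_hor convex_CBase)

lemma shadow_nth_fst: "s \<in> shadow \<Longrightarrow> s $ fst i = 0"
  by (auto simp: shadow_def)

lemma hor_shadow: "s \<in> shadow \<Longrightarrow> hor i s = s"
  by (simp add: hor_eq_self shadow_nth_fst)

lemma shadow_lift_in_U: "s \<in> shadow \<Longrightarrow> s + (qstar s + \<epsilon>) *\<^sub>R upv i \<in> U"
proof -
  assume "s \<in> shadow"
  then obtain z where z: "z \<in> CBase i U \<epsilon> pH" "s = hor i z" by (auto simp: shadow_def)
  then have "z = s + (qstar s + \<epsilon>) *\<^sub>R upv i"
    using hor_plus_hgt[of i z] by (auto simp: CBase_eq)
  then show ?thesis using z by (auto simp: CBase_eq)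
qed

lemma hor_p_in_shadow: "hor i (fst pH) \<in> shadow"
proof -
  have "fst pH + \<epsilon> *\<^sub>R upv i \<in> CBase i U \<epsilon> pH"
    using p_in_U hgt_p eps Kdual_climb[of "fst pH" K i \<epsilon> \<epsilon>] by (auto simp: CBase_eq)
  then show ?thesis unfolding shadow_def by (rule rev_image_eqI) simp
qed

end

section \<open>Volume of prisms over horizontal sets\<close>

lemma Basis_real_vec_eq: "(Basis :: (real^'n) set) = (\<lambda>k. axis k 1) ` UNIV"
  by (auto simp: Basis_vec_def)

definition join_coord :: "'n \<Rightarrow> ('n \<Rightarrow> real) \<times> real \<Rightarrow> real^'n" where
  "join_coord j = (\<lambda>(f, \<tau>). \<chi> k. if k = j then \<tau> else f k)"

lemma join_coord_nth: "join_coord j (f, \<tau>) $ k = (if k = j then \<tau> else f k)"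
  by (simp add: join_coord_def)

lemma measurable_join_coord:
  fixes j :: "'n::finite"
  shows "join_coord j \<in> (PiM (-{j}) (\<lambda>_. lborel) \<Otimes>\<^sub>M lborel) \<rightarrow>\<^sub>M borel"
proof (subst borel_measurable_euclidean_space, intro ballI)
  fix b :: "real^'n" assume "b \<in> Basis"
  then obtain k where b: "b = axis k 1" by (auto simp: Basis_real_vec_eq)
  show "(\<lambda>x. join_coord j x \<bullet> b) \<in> borel_measurable (PiM (-{j}) (\<lambda>_. lborel) \<Otimes>\<^sub>M lborel)"
  proof (cases "k = j")
    case True
    then have "(\<lambda>x. join_coord j x \<bullet> b) = snd" by (auto simp: b inner_axis join_coord_def fun_eq_iff)
    then show ?thesis by simp
  next
    case False
    then have "(\<lambda>x. join_coord j x \<bullet> b) = (\<lambda>f. f k) \<circ> fst" by (auto simp: b inner_axis join_coord_def fun_eq_iff)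
    moreover have "(\<lambda>f. f k) \<in> borel_measurable (PiM (-{j}) (\<lambda>_. lborel :: real measure))"
      using measurable_component_singleton[of k "-{j}" "\<lambda>_. lborel :: real measure"] False by simp
    ultimately show ?thesis by (simp add: measurable_comp[OF measurable_fst])
  qed
qed

lemma join_coord_preimage_box:
  fixes j :: "'n::finite"
  shows "join_coord j -` box l u \<inter> space (PiM (-{j}) (\<lambda>_. lborel) \<Otimes>\<^sub>M lborel)
      = (PiE (-{j}) (\<lambda>k. {l $ k <..< u $ k})) \<times> {l $ j <..< u $ j}"
proof (intro set_eqI)
  fix x :: "('n \<Rightarrow> real) \<times> real"
  obtain f \<tau> where x: "x = (f, \<tau>)" by fastforce
  have mb: "join_coord j (f,\<tau>) \<in> box l u \<longleftrightarrow> (\<forall>k. l$k < join_coord j (f,\<tau>) $ k \<and> join_coord j (f,\<tau>) $ k < u$k)"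
    by (simp add: mem_box Basis_real_vec_eq inner_axis)
  have sp: "x \<in> space (PiM (-{j}) (\<lambda>_. lborel) \<Otimes>\<^sub>M lborel) \<longleftrightarrow> f \<in> extensional (-{j})"
    by (simp add: x space_pair_measure space_PiM PiE_def)
  show "x \<in> join_coord j -` box l u \<inter> space (PiM (-{j}) (\<lambda>_. lborel) \<Otimes>\<^sub>M lborel) \<longleftrightarrow>
      x \<in> (PiE (-{j}) (\<lambda>k. {l $ k <..< u $ k})) \<times> {l $ j <..< u $ j}"
  proof
    assume "x \<in> join_coord j -` box l u \<inter> space (PiM (-{j}) (\<lambda>_. lborel) \<Otimes>\<^sub>M lborel)"
    then have a: "\<forall>k. l$k < join_coord j (f,\<tau>) $ k \<and> join_coord j (f,\<tau>) $ k < u$k" "f \<in> extensional (-{j})"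
      using mb sp by (auto simp: x)
    have "l$k < f k \<and> f k < u$k" if "k \<noteq> j" for k using a(1)[rule_format, of k] that by (simp add: join_coord_nth)
    moreover have "l$j < \<tau> \<and> \<tau> < u$j" using a(1)[rule_format, of j] by (simp add: join_coord_nth)
    ultimately show "x \<in> (PiE (-{j}) (\<lambda>k. {l $ k <..< u $ k})) \<times> {l $ j <..< u $ j}"
      using a(2) by (auto simp: x PiE_def Pi_def)
  next
    assume "x \<in> (PiE (-{j}) (\<lambda>k. {l $ k <..< u $ k})) \<times> {l $ j <..< u $ j}"
    then have a: "\<forall>k. k \<noteq> j \<longrightarrow> l$k < f k \<and> f k < u$k" "l$j < \<tau> \<and> \<tau> < u$j" "f \<in> extensional (-{j})"
      by (auto simp: x PiE_def Pi_def)
    have "l$k < join_coord j (f,\<tau>) $ k \<and> join_coord j (f,\<tau>) $ k < u$k" for k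
      using a by (cases "k = j") (auto simp: join_coord_nth)
    then show "x \<in> join_coord j -` box l u \<inter> space (PiM (-{j}) (\<lambda>_. lborel) \<Otimes>\<^sub>M lborel)"
      using mb sp a(3) by (auto simp: x)
  qed
qed

lemma lborel_eq_distr_join_coord:
  fixes j :: "'n::finite"
  shows "(lborel :: (real^'n) measure) = distr (PiM (-{j}) (\<lambda>_. lborel) \<Otimes>\<^sub>M lborel) borel (join_coord j)"
proof (rule lborel_eqI)
  interpret P: product_sigma_finite "\<lambda>_::'n. lborel :: real measure"
    by standard
  interpret Pf: finite_product_sigma_finite "\<lambda>_::'n. lborel :: real measure" "-{j}"
    by standard simp
  fix l u :: "real^'n" assume lu: "\<And>b. b \<in> Basis \<Longrightarrow> l \<bullet> b \<le> u \<bullet> b"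
  have lu': "l $ k \<le> u $ k" for k using lu[of "axis k 1"] by (auto simp: Basis_real_vec_eq inner_axis)
  have "emeasure (distr (PiM (-{j}) (\<lambda>_. lborel) \<Otimes>\<^sub>M lborel) borel (join_coord j)) (box l u)
      = emeasure (PiM (-{j}) (\<lambda>_. lborel) \<Otimes>\<^sub>M lborel) ((PiE (-{j}) (\<lambda>k. {l $ k <..< u $ k})) \<times> {l $ j <..< u $ j})"
    by (subst emeasure_distr[OF measurable_join_coord]) (auto simp: join_coord_preimage_box)
  also have "\<dots> = emeasure (PiM (-{j}) (\<lambda>_. lborel)) (PiE (-{j}) (\<lambda>k. {l $ k <..< u $ k})) * emeasure lborel {l $ j <..< u $ j}"
    by (intro sigma_finite_measure.emeasure_pair_measure_Times sigma_finite_lborel sets_PiM_I_finite) auto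
  also have "\<dots> = (\<Prod>k\<in>-{j}. ennreal (u $ k - l $ k)) * ennreal (u $ j - l $ j)"
    using lu' by (subst P.emeasure_PiM) auto
  also have "\<dots> = ennreal ((\<Prod>k\<in>-{j}. (u $ k - l $ k)) * (u $ j - l $ j))"
    using lu' by (simp add: prod_ennreal ennreal_mult prod_nonneg)
  also have "(\<Prod>k\<in>-{j}. (u $ k - l $ k)) * (u $ j - l $ j) = (\<Prod>k\<in>UNIV. (u $ k - l $ k))"
    using prod.remove[of UNIV j "\<lambda>k. u $ k - l $ k"] by (simp add: Compl_eq_Diff_UNIV mult.commute)
  also have "(\<Prod>k\<in>UNIV. (u $ k - l $ k)) = (\<Prod>b\<in>Basis. (u - l) \<bullet> b)"
    unfolding Basis_real_vec_eq
    by (subst prod.reindex) (auto simp: inj_on_def axis_eq_axis inner_axis)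
  finally show "emeasure (distr (PiM (-{j}) (\<lambda>_. lborel) \<Otimes>\<^sub>M lborel) borel (join_coord j)) (box l u)
      = (\<Prod>b\<in>Basis. (u - l) \<bullet> b)" .
qed simp


lemma restrict_image_eq_join_coord:
  fixes E :: "(real^'n::finite) set" and j :: 'n
  assumes E: "\<forall>w\<in>E. w $ j = 0"
  shows "(\<lambda>z. restrict (\<lambda>k. z $ k) (-{j})) ` E
       = {f \<in> space (PiM (-{j}) (\<lambda>_. lborel :: real measure)). join_coord j (f, 0) \<in> E}"
proof (intro set_eqI iffI)
  fix f assume "f \<in> (\<lambda>z. restrict (\<lambda>k. z $ k) (-{j})) ` E"
  then obtain z where z: "z \<in> E" "f = restrict (\<lambda>k. z $ k) (-{j})" by blast
  have "join_coord j (f, 0) $ k = z $ k" for k using E z by (simp add: join_coord_nth)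
  then have "join_coord j (f, 0) = z" by (simp add: vec_eq_iff)
  then show "f \<in> {f \<in> space (PiM (-{j}) (\<lambda>_. lborel :: real measure)). join_coord j (f, 0) \<in> E}"
    using z by (simp add: space_PiM)
next
  fix f assume f: "f \<in> {f \<in> space (PiM (-{j}) (\<lambda>_. lborel :: real measure)). join_coord j (f, 0) \<in> E}"
  then have ext: "f \<in> extensional (-{j})" by (simp add: space_PiM PiE_def)
  have "restrict (\<lambda>k. join_coord j (f, 0) $ k) (-{j}) k = f k" for k
  proof (cases "k = j")
    case True then show ?thesis using ext by (simp add: extensional_def)
  next
    case False then show ?thesis by (simp add: join_coord_nth)
  qed
  then have "f = restrict (\<lambda>k. join_coord j (f, 0) $ k) (-{j})" by (simp add: fun_eq_iff)
  moreover have "join_coord j (f, 0) \<in> E" using f by simp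
  ultimately show "f \<in> (\<lambda>z. restrict (\<lambda>k. z $ k) (-{j})) ` E" by (rule image_eqI)
qed

lemma sets_join_coord_preimage:
  fixes E :: "(real^'n::finite) set" and j :: 'n
  assumes "closed E"
  shows "{f \<in> space (PiM (-{j}) (\<lambda>_. lborel :: real measure)). join_coord j (f, 0) \<in> E} \<in> sets (PiM (-{j}) (\<lambda>_. lborel :: real measure))"
proof -
  define P where "P = PiM (-{j}) (\<lambda>_. lborel :: real measure)"
  have pm: "(\<lambda>f. (f, 0::real)) \<in> P \<rightarrow>\<^sub>M P \<Otimes>\<^sub>M lborel"
    by (intro measurable_Pair measurable_ident_sets refl measurable_const) auto
  have "(\<lambda>f. join_coord j (f, 0)) \<in> P \<rightarrow>\<^sub>M borel"
    using measurable_comp[OF pm measurable_join_coord[of j, folded P_def]]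
    by (simp add: comp_def)
  moreover have "E \<in> sets borel" using assms by (simp add: borel_closed)
  ultimately show ?thesis unfolding P_def[symmetric]
    by (simp add: measurable_sets_Collect)
qed

lemma join_coord_in_prism_iff:
  assumes E: "\<forall>w\<in>E. w $ j = 0"
  shows "join_coord j (f, \<tau>) \<in> {w + (\<phi> w + v) *\<^sub>R axis j 1 | w v. w \<in> E \<and> v \<in> {a..b}}
    \<longleftrightarrow> join_coord j (f, 0) \<in> E \<and> \<tau> \<in> {\<phi> (join_coord j (f, 0)) + a .. \<phi> (join_coord j (f, 0)) + b}"
proof -
  define wf where "wf = join_coord j (f, 0)"
  have wf: "join_coord j (f, \<tau>) = wf + \<tau> *\<^sub>R axis j 1" "wf $ j = 0"
    by (auto simp: vec_eq_iff join_coord_nth wf_def axis_def)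
  have unique: "wf = w \<and> \<tau> = c" if "wf + \<tau> *\<^sub>R axis j 1 = w + c *\<^sub>R axis j 1" "w $ j = 0" for w c
  proof -
    have "\<tau> = c" using arg_cong[OF that(1), of "\<lambda>x. x $ j"] that(2) wf(2) by (simp add: axis_def)
    with that(1) show ?thesis by simp
  qed
  show ?thesis
    unfolding wf(1) wf_def[symmetric]
  proof
    assume "wf + \<tau> *\<^sub>R axis j 1 \<in> {w + (\<phi> w + v) *\<^sub>R axis j 1 | w v. w \<in> E \<and> v \<in> {a..b}}"
    then obtain w v where "w \<in> E" "v \<in> {a..b}" "wf + \<tau> *\<^sub>R axis j 1 = w + (\<phi> w + v) *\<^sub>R axis j 1"
      by blast
    then show "wf \<in> E \<and> \<tau> \<in> {\<phi> wf + a .. \<phi> wf + b}" using unique E by fastforce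
  next
    assume "wf \<in> E \<and> \<tau> \<in> {\<phi> wf + a .. \<phi> wf + b}"
    then show "wf + \<tau> *\<^sub>R axis j 1 \<in> {w + (\<phi> w + v) *\<^sub>R axis j 1 | w v. w \<in> E \<and> v \<in> {a..b}}"
      by (intro CollectI exI[of _ wf] exI[of _ "\<tau> - \<phi> wf"]) auto
  qed
qed

lemma emeasure_prism_axis:
  fixes E :: "(real^'n::finite) set" and j :: 'n and \<phi> :: "real^'n \<Rightarrow> real"
  assumes E: "compact E" "\<forall>w\<in>E. w $ j = 0" and \<phi>: "continuous_on E \<phi>" and ab: "a \<le> b"
  shows "emeasure lebesgue {w + (\<phi> w + v) *\<^sub>R axis j 1 | w v. w \<in> E \<and> v \<in> {a..b}}
    = ennreal (b - a) * emeasure (PiM (-{j}) (\<lambda>_. lborel)) ((\<lambda>z. restrict (\<lambda>k. z $ k) (-{j})) ` E)"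
proof -
  define S where "S = {w + (\<phi> w + v) *\<^sub>R axis j 1 | w v. w \<in> E \<and> v \<in> {a..b}}"
  define P where "P = PiM (-{j}) (\<lambda>_. lborel :: real measure)"
  have SI: "S = (\<lambda>x. fst x + (\<phi> (fst x) + snd x) *\<^sub>R axis j 1) ` (E \<times> {a..b})"
    unfolding S_def by (auto simp: image_def) (metis atLeastAtMost_iff)+
  have "compact S" unfolding SI
    by (intro compact_continuous_image compact_Times E compact_Icc continuous_intros
        continuous_on_compose2[OF \<phi>]) auto
  then have Sb: "S \<in> sets borel" by (simp add: compact_imp_closed borel_closed)
  then have "emeasure lebesgue S = emeasure lborel S" by simp
  also have "\<dots> = emeasure (distr (P \<Otimes>\<^sub>M lborel) borel (join_coord j)) S"
    by (simp add: P_def flip: lborel_eq_distr_join_coord)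
  also have "\<dots> = emeasure (P \<Otimes>\<^sub>M lborel) (join_coord j -` S \<inter> space (P \<Otimes>\<^sub>M lborel))"
    by (rule emeasure_distr[OF measurable_join_coord[of j, folded P_def] Sb])
  also have "\<dots> = (\<integral>\<^sup>+f. emeasure lborel (Pair f -` (join_coord j -` S \<inter> space (P \<Otimes>\<^sub>M lborel))) \<partial>P)"
    by (rule sigma_finite_measure.emeasure_pair_measure_alt[OF sigma_finite_lborel])
      (rule measurable_sets[OF measurable_join_coord[of j, folded P_def] Sb])
  also have "\<dots> = (\<integral>\<^sup>+f. ennreal (b - a) * indicator {f \<in> space P. join_coord j (f, 0) \<in> E} f \<partial>P)"
  proof (intro nn_integral_cong)
    fix f assume f: "f \<in> space P"
    define wf where "wf = join_coord j (f, 0)"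
    have "Pair f -` (join_coord j -` S \<inter> space (P \<Otimes>\<^sub>M lborel))
        = (if wf \<in> E then {\<phi> wf + a .. \<phi> wf + b} else {})"
      using f join_coord_in_prism_iff[OF E(2), of f _ \<phi> a b]
      by (auto simp: S_def wf_def space_pair_measure)
    then show "emeasure lborel (Pair f -` (join_coord j -` S \<inter> space (P \<Otimes>\<^sub>M lborel)))
        = ennreal (b - a) * indicator {f \<in> space P. join_coord j (f, 0) \<in> E} f"
      using f ab by (simp add: wf_def[symmetric] indicator_def)
  qed
  also have "\<dots> = ennreal (b - a) * emeasure P {f \<in> space P. join_coord j (f, 0) \<in> E}"
    using sets_join_coord_preimage[of E j] E(1) by (intro nn_integral_cmult_indicator) (simp_all add: P_def compact_imp_closed)
  finally show ?thesis
    unfolding S_def[symmetric] P_def restrict_image_eq_join_coord[OF E(2)] by simp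
qed

lemma area_eq_emeasure_PiM:
  assumes "compact E" "\<forall>w\<in>E. w $ fst i = 0"
  shows "area i E = emeasure (PiM (-{fst i}) (\<lambda>_. lborel)) ((\<lambda>z. restrict (\<lambda>k. z $ k) (-{fst i})) ` E)"
  unfolding area_def restrict_image_eq_join_coord[OF assms(2)]
  using sets_join_coord_preimage[of E "fst i"] assms(1) compact_imp_closed by (subst emeasure_completion) auto

lemma emeasure_prism:
  fixes E :: "(real^'n::finite) set" and \<psi> :: "real^'n \<Rightarrow> real"
  assumes E: "compact E" "\<forall>w\<in>E. w $ fst i = 0" and \<psi>: "continuous_on E \<psi>" and r: "r \<ge> 0"
  shows "emeasure lebesgue {w + (\<psi> w + v) *\<^sub>R upv i | w v. w \<in> E \<and> v \<in> {-r..r}} = ennreal (2 * r) * area i E"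
proof -
  define \<sigma> :: real where "\<sigma> = (if snd i then -1 else 1)"
  have s: "\<sigma> * \<sigma> = 1" by (simp add: \<sigma>_def)
  have eq: "{w + (\<psi> w + v) *\<^sub>R upv i | w v. w \<in> E \<and> v \<in> {-r..r}}
      = {w + ((\<lambda>w. \<sigma> * \<psi> w) w + v) *\<^sub>R axis (fst i) 1 | w v. w \<in> E \<and> v \<in> {-r..r}}"
  proof (intro set_eqI iffI)
    fix z assume "z \<in> {w + (\<psi> w + v) *\<^sub>R upv i | w v. w \<in> E \<and> v \<in> {-r..r}}"
    then obtain w v where wv: "w \<in> E" "v \<in> {-r..r}" "z = w + (\<psi> w + v) *\<^sub>R upv i" by blast
    have "z = w + ((\<lambda>w. \<sigma> * \<psi> w) w + \<sigma> * v) *\<^sub>R axis (fst i) 1"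
      using wv(3) by (simp add: upv_axis \<sigma>_def[symmetric] algebra_simps)
    moreover have "\<sigma> * v \<in> {-r..r}" using wv(2) by (auto simp: \<sigma>_def)
    ultimately show "z \<in> {w + ((\<lambda>w. \<sigma> * \<psi> w) w + v) *\<^sub>R axis (fst i) 1 | w v. w \<in> E \<and> v \<in> {-r..r}}"
      using wv(1) by blast
  next
    fix z assume "z \<in> {w + ((\<lambda>w. \<sigma> * \<psi> w) w + v) *\<^sub>R axis (fst i) 1 | w v. w \<in> E \<and> v \<in> {-r..r}}"
    then obtain w v where wv: "w \<in> E" "v \<in> {-r..r}" "z = w + (\<sigma> * \<psi> w + v) *\<^sub>R axis (fst i) 1" by blast
    have "z = w + (\<psi> w + \<sigma> * v) *\<^sub>R upv i"
      using wv(3) s by (simp add: upv_axis \<sigma>_def[symmetric] algebra_simps)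
    moreover have "\<sigma> * v \<in> {-r..r}" using wv(2) by (auto simp: \<sigma>_def)
    ultimately show "z \<in> {w + (\<psi> w + v) *\<^sub>R upv i | w v. w \<in> E \<and> v \<in> {-r..r}}"
      using wv(1) by blast
  qed
  have "continuous_on E (\<lambda>w. \<sigma> * \<psi> w)" by (intro continuous_intros \<psi>)
  from emeasure_prism_axis[OF E this, of "-r" r] r
  show ?thesis unfolding eq area_eq_emeasure_PiM[OF E] by simp
qed

lemma area_eq_0_if_in_hyperplane:
  fixes E :: "(real^'n::finite) set"
  assumes E: "compact E" "\<forall>w\<in>E. w $ fst i = 0" and a: "a $ fst i = 0" "a \<noteq> 0"
    and h: "\<forall>w\<in>E. a \<bullet> w = \<beta>"
  shows "area i E = 0"
proof -
  have au: "a \<bullet> upv i = 0" using a by (simp add: upv_axis inner_axis)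
  have sub: "{w + (0 + v) *\<^sub>R upv i | w v. w \<in> E \<and> v \<in> {-1..1}} \<subseteq> {z. a \<bullet> z = \<beta>}"
    using h au by (auto simp: inner_add_right)
  have "negligible {w + (0 + v) *\<^sub>R upv i | w v. w \<in> E \<and> v \<in> {-1..1::real}}"
    by (rule negligible_subset[OF negligible_hyperplane sub]) (use a in auto)
  then have "emeasure lebesgue {w + (0 + v) *\<^sub>R upv i | w v. w \<in> E \<and> v \<in> {-1..1::real}} = 0"
    unfolding negligible_iff_null_sets by (rule null_setsD1)
  moreover have "emeasure lebesgue {w + ((\<lambda>_. 0) w + v) *\<^sub>R upv i | w v. w \<in> E \<and> v \<in> {-1..1::real}} = ennreal (2 * 1) * area i E"
    by (rule emeasure_prism[OF E]) auto
  ultimately show ?thesis by simp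
qed

section \<open>A centre of symmetry of a convex set\<close>

lemma compact_rows: "compact D \<Longrightarrow> compact {M::real^'n::finite^'n. \<forall>k. M$k \<in> D}"
proof -
  assume D: "compact D"
  have "{M::real^'n::finite^'n. \<forall>k. M$k \<in> D} = (\<Inter>k. (\<lambda>M. M $ k) -` D)" by auto
  moreover have "closed ((\<lambda>M::real^'n::finite^'n. M $ k) -` D)" for k
    by (intro continuous_closed_vimage compact_imp_closed D)
      (simp add: bounded_linear_vec_nth linear_continuous_at)
  ultimately have closed: "closed {M::real^'n::finite^'n. \<forall>k. M$k \<in> D}" by (simp add: closed_INT)
  obtain R where R: "\<forall>x\<in>D. norm x \<le> R" using D compact_imp_bounded bounded_iff by metis
  have "norm M \<le> (\<Sum>k\<in>UNIV. norm (M $ k))" for M :: "real^'n^'n"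
    by (simp add: norm_vec_def L2_set_le_sum)
  then have "bounded {M::real^'n::finite^'n. \<forall>k. M$k \<in> D}"
    unfolding bounded_iff using R
    by (intro exI[of _ "real CARD('n) * R"] ballI) (smt (verit) mem_Collect_eq sum_bounded_above)
  with closed show ?thesis by (simp add: compact_eq_bounded_closed)
qed

lemma row_eq_nth [simp]: "row k A = A $ k"
  by (simp add: row_def vec_eq_iff)

lemma exists_rows_det_nonzero:
  fixes S :: "(real^'n::finite) set"
  assumes "dim S = CARD('n)"
  shows "\<exists>L. (\<forall>k. L $ k \<in> S) \<and> det L \<noteq> 0"
proof -
  obtain B where B: "B \<subseteq> S" "independent B" "card B = dim S"
    by (rule real_vector.basis_exists)
  have fB: "finite B" using B(2) by (rule independent_imp_finite)
  obtain h where h: "bij_betw h (UNIV::'n set) B"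
    using finite_same_card_bij[of "UNIV::'n set" B] fB B(3) assms by auto
  define L :: "real^'n^'n" where "L = (\<chi> k. h k)"
  have "det L \<noteq> 0"
  proof
    assume "det L = 0"
    then have "\<not> (\<exists>B'. L ** B' = mat 1)"
      using invertible_det_nz[of L] invertible_right_inverse[of L] by simp
    then obtain c k where c: "(\<Sum>m\<in>UNIV. c m *s row m L) = 0" "c k \<noteq> 0"
      unfolding matrix_right_invertible_independent_rows by blast
    define u where "u v = c (inv_into UNIV h v)" for v
    have hinv: "inv_into UNIV h (h m) = m" for m
      using h by (simp add: bij_betw_def inv_into_f_f)
    have "(\<Sum>v\<in>B. u v *\<^sub>R v) = (\<Sum>m\<in>UNIV. u (h m) *\<^sub>R h m)"
      using sum.reindex_bij_betw[OF h, of "\<lambda>v. u v *\<^sub>R v"] by simp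
    also have "\<dots> = 0"
      using c(1) by (simp add: u_def hinv L_def scalar_mult_eq_scaleR)
    finally have "(\<Sum>v\<in>B. u v *\<^sub>R v) = 0" .
    moreover have "h k \<in> B" "u (h k) \<noteq> 0" using h c(2) by (auto simp: bij_betw_def u_def hinv)
    ultimately have "dependent B"
      unfolding real_vector.dependent_explicit using fB by blast
    then show False using B(2) by simp
  qed
  moreover have "\<forall>k. L $ k \<in> S" using h B(1) by (auto simp: L_def bij_betw_def)
  ultimately show ?thesis by blast
qed

text \<open>Lifting a set of the hyperplane \<open>{x\<^sub>j = 0}\<close> to height \<open>1\<close> turns affine dependence into
  linear dependence.\<close>
lemma in_hyperplane_if_lifted_rows_singular:
  fixes D :: "(real^'n::finite) set"
  assumes D: "D \<noteq> {}" "\<forall>x\<in>D. x $ j = 0"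
    and singular: "\<And>M. (\<forall>k. M $ k \<in> D) \<Longrightarrow> det (\<chi> k. M $ k + axis j 1) = 0"
  shows "\<exists>a \<beta>. a \<noteq> 0 \<and> a $ j = 0 \<and> (\<forall>x\<in>D. a \<bullet> x = \<beta>)"
proof -
  define S where "S = (\<lambda>x. x + axis j 1) ` D"
  have "dim S \<noteq> CARD('n)"
  proof
    assume "dim S = CARD('n)"
    then obtain L where L: "\<forall>k. L $ k \<in> S" "det L \<noteq> 0"
      using exists_rows_det_nonzero by blast
    define M where "M = (\<chi> k. L $ k - axis j 1)"
    have "L $ k - axis j 1 \<in> D" for k using spec[OF L(1), of k] by (auto simp: S_def)
    then have "det (\<chi> k. M $ k + axis j 1) = 0" by (intro singular) (simp add: M_def)
    moreover have "(\<chi> k. M $ k + axis j 1) = L" by (simp add: M_def vec_eq_iff)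
    ultimately show False using L(2) by simp
  qed
  then have "dim S < DIM(real^'n)" using dim_subset_UNIV_cart[of S] by simp
  then obtain a :: "real^'n" where a: "a \<noteq> 0" "\<And>y. y \<in> span S \<Longrightarrow> orthogonal a y"
    using orthogonal_to_subspace_exists by blast
  have aS: "a \<bullet> x + a $ j = 0" if "x \<in> D" for x
  proof -
    have "orthogonal a (x + axis j 1)" using a(2)[OF span_base] that by (simp add: S_def)
    then show ?thesis by (simp add: orthogonal_def inner_add_right inner_axis)
  qed
  define a' where "a' = a - (a $ j) *\<^sub>R axis j 1"
  have a'x: "a' \<bullet> x = - (a $ j)" if "x \<in> D" for x
    using aS[OF that] D(2) that by (simp add: a'_def inner_diff_left inner_axis')
  have "a' \<noteq> 0"
  proof
    assume "a' = 0"
    moreover obtain x where "x \<in> D" using D(1) by blast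
    ultimately have "a $ j = 0" using a'x by simp
    then show False using \<open>a' = 0\<close> a(1) by (simp add: a'_def)
  qed
  moreover have "a' $ j = 0" by (simp add: a'_def)
  ultimately show ?thesis using a'x by blast
qed

text \<open>If the lifted rows \<open>M\<^sub>0\<^sub>k + e\<^sub>j\<close> maximise \<open>|det|\<close>, Cramer's rule writes every lifted
  point of \<open>D\<close> in this basis with coefficients of modulus at most \<open>1\<close>; comparing \<open>j\<close>-th
  coordinates shows that they sum to \<open>1\<close>.\<close>
lemma max_det_affine_coords:
  fixes D :: "(real^'n::finite) set"
  assumes D: "\<forall>x\<in>D. x $ j = 0" and M0: "\<forall>k. M0 $ k \<in> D"
    and max: "\<And>M. (\<forall>k. M $ k \<in> D) \<Longrightarrow> \<bar>det (\<chi> k. M $ k + axis j 1)\<bar> \<le> \<bar>det (\<chi> k. M0 $ k + axis j 1)\<bar>"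
    and nz: "det (\<chi> k. M0 $ k + axis j 1) \<noteq> 0" and x: "x \<in> D"
  shows "\<exists>lam::real^'n. (\<forall>k. \<bar>lam $ k\<bar> \<le> 1) \<and> (\<Sum>k\<in>UNIV. lam $ k) = 1
           \<and> x = (\<Sum>k\<in>UNIV. lam $ k *\<^sub>R M0 $ k)"
proof -
  define L :: "real^'n^'n" where "L = (\<chi> k. M0 $ k + axis j 1)"
  obtain lam :: "real^'n" where lam: "transpose L *v lam = x + axis j 1"
    using cramer[of "transpose L" _ "x + axis j 1"] nz by (auto simp: det_transpose L_def)
  have lsum: "(\<Sum>k\<in>UNIV. lam $ k *s row k L) = x + axis j 1"
    using lam by (simp add: matrix_mult_sum column_transpose)
  have "\<bar>lam $ k\<bar> \<le> 1" for k
  proof -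
    define M' where "M' = (\<chi> m. if m = k then x else M0 $ m)"
    have "det (\<chi> m. M' $ m + axis j 1)
        = det (\<chi> m. if m = k then (\<Sum>i\<in>UNIV. lam $ i *s row i L) else row m L)"
      unfolding lsum by (rule arg_cong[of _ _ det]) (simp add: vec_eq_iff M'_def L_def)
    also have "\<dots> = lam $ k * det L" by (rule cramer_lemma_transpose)
    finally have "det (\<chi> m. M' $ m + axis j 1) = lam $ k * det L" .
    moreover have "\<forall>m. M' $ m \<in> D" using x M0 by (simp add: M'_def)
    then have "\<bar>det (\<chi> m. M' $ m + axis j 1)\<bar> \<le> \<bar>det L\<bar>" unfolding L_def by (rule max)
    ultimately have "\<bar>lam $ k\<bar> * \<bar>det L\<bar> \<le> 1 * \<bar>det L\<bar>" by (simp add: abs_mult)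
    then show ?thesis using nz by (simp add: L_def mult_le_cancel_right)
  qed
  moreover have lsum': "(\<Sum>k\<in>UNIV. lam $ k *\<^sub>R M0 $ k) + (\<Sum>k\<in>UNIV. lam $ k) *\<^sub>R axis j 1 = x + axis j 1"
    using lsum by (simp add: L_def scalar_mult_eq_scaleR scaleR_add_right sum.distrib scaleR_sum_left)
  moreover have "M0 $ k $ j = 0" "x $ j = 0" for k using D x M0 by blast+
  then have "(\<Sum>k\<in>UNIV. lam $ k) = 1"
    using arg_cong[OF lsum', of "\<lambda>v. v $ j"] by simp
  ultimately show ?thesis by (intro exI[of _ lam]) simp
qed

lemma exists_max_det_lifted_rows:
  fixes D :: "(real^'n::finite) set"
  assumes "compact D" "D \<noteq> {}"
  obtains M0 where "\<forall>k. M0 $ k \<in> D"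
    "\<And>M. (\<forall>k. M $ k \<in> D) \<Longrightarrow> \<bar>det (\<chi> k. M $ k + axis j 1)\<bar> \<le> \<bar>det (\<chi> k. M0 $ k + axis j 1)\<bar>"
proof -
  define Mset where "Mset = {M::real^'n^'n. \<forall>k. M$k \<in> D}"
  obtain x0 where "x0 \<in> D" using assms(2) by blast
  then have "Mset \<noteq> {}" by (auto simp: Mset_def intro!: exI[of _ "\<chi> k. x0"])
  moreover have "continuous_on Mset (\<lambda>M. \<bar>det (\<chi> k. M $ k + axis j 1)\<bar>)"
    unfolding det_def by (intro continuous_intros)
  ultimately have "\<exists>M0\<in>Mset. \<forall>M\<in>Mset. \<bar>det (\<chi> k. M $ k + axis j 1)\<bar> \<le> \<bar>det (\<chi> k. M0 $ k + axis j 1)\<bar>"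
    by (rule continuous_attains_sup[OF compact_rows[OF assms(1), folded Mset_def]])
  then show ?thesis using that unfolding Mset_def by blast
qed

lemma centroid_reflection_in_convex:
  fixes M0 :: "real^'n::finite^'n"
  assumes D: "convex D" "\<forall>k. M0 $ k \<in> D"
    and lam: "\<And>k. \<bar>lam $ k\<bar> \<le> 1" "(\<Sum>k\<in>UNIV. lam $ k) = 1"
  defines "d \<equiv> real CARD('n)"
  defines "c \<equiv> (\<Sum>k\<in>UNIV. (1/d) *\<^sub>R M0 $ k)"
  shows "c - (1 / d) *\<^sub>R ((\<Sum>k\<in>UNIV. lam $ k *\<^sub>R M0 $ k) - c) \<in> D"
proof -
  have d1: "d \<ge> 1" by (simp add: d_def)
  define mu where "mu k = (1/d) * (1 + 1/d) - lam $ k / d" for k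
  have eq: "c - (1 / d) *\<^sub>R ((\<Sum>k\<in>UNIV. lam $ k *\<^sub>R M0 $ k) - c) = (\<Sum>k\<in>UNIV. mu k *\<^sub>R M0 $ k)"
    by (simp add: c_def mu_def scaleR_sum_right sum_subtractf[symmetric] algebra_simps
        scaleR_diff_left scaleR_add_left flip: sum.distrib)
  have "0 \<le> mu k" for k
  proof -
    have "lam $ k / d \<le> 1 / d" using lam(1)[of k] d1 by (simp add: divide_right_mono)
    moreover have "0 \<le> 1 / (d * d)" by simp
    ultimately have "lam $ k / d \<le> 1 / d + 1 / (d * d)" by linarith
    then show ?thesis by (simp add: mu_def algebra_simps)
  qed
  moreover have "sum mu UNIV = 1"
  proof -
    have "sum mu UNIV = d * ((1/d) * (1 + 1/d)) - (\<Sum>k\<in>UNIV. lam $ k) / d"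
      by (simp add: mu_def sum_subtractf sum_divide_distrib d_def)
    also have "\<dots> = 1" using lam(2) d1 by (simp add: field_simps)
    finally show ?thesis .
  qed
  ultimately show ?thesis unfolding eq using D by (intro convex_sum D(1)) auto
qed

text \<open>The centroid of a simplex of maximal volume inscribed in \<open>D\<close> is a centre of
  \<open>1/d\<close>-symmetry of \<open>D\<close>.\<close>
lemma exists_center_of_symmetry:
  fixes D :: "(real^'n::finite) set"
  assumes D: "compact D" "convex D" "D \<noteq> {}" "\<forall>x\<in>D. x $ j = 0"
    and full: "\<not> (\<exists>a \<beta>. a \<noteq> 0 \<and> a $ j = 0 \<and> (\<forall>x\<in>D. a \<bullet> x = \<beta>))"
  shows "\<exists>c\<in>D. \<forall>x\<in>D. c - (1 / real CARD('n)) *\<^sub>R (x - c) \<in> D"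
proof -
  obtain M0 where M0: "\<forall>k. M0 $ k \<in> D"
    "\<And>M. (\<forall>k. M $ k \<in> D) \<Longrightarrow> \<bar>det (\<chi> k. M $ k + axis j 1)\<bar> \<le> \<bar>det (\<chi> k. M0 $ k + axis j 1)\<bar>"
    using exists_max_det_lifted_rows[OF D(1,3)] by blast
  have nz: "det (\<chi> k. M0 $ k + axis j 1) \<noteq> 0"
  proof
    assume "det (\<chi> k. M0 $ k + axis j 1) = 0"
    then have "det (\<chi> k. M $ k + axis j 1) = 0" if "\<forall>k. M $ k \<in> D" for M
      using M0(2)[OF that] by simp
    then show False using full in_hyperplane_if_lifted_rows_singular[OF D(3,4)] by metis
  qed
  define c where "c = (\<Sum>k\<in>UNIV. (1 / real CARD('n)) *\<^sub>R M0 $ k)"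
  have "c \<in> D"
    unfolding c_def using M0(1) by (intro convex_sum D(2)) auto
  moreover have "c - (1 / real CARD('n)) *\<^sub>R (x - c) \<in> D" if x: "x \<in> D" for x
  proof -
    obtain lam :: "real^'n" where lam: "\<And>k. \<bar>lam $ k\<bar> \<le> 1" "(\<Sum>k\<in>UNIV. lam $ k) = 1"
      "x = (\<Sum>k\<in>UNIV. lam $ k *\<^sub>R M0 $ k)"
      using max_det_affine_coords[OF D(4) M0 nz x] by blast
    show ?thesis
      using centroid_reflection_in_convex[OF D(2) M0(1) lam(1,2)] unfolding c_def lam(3) .
  qed
  ultimately show ?thesis by blast
qed

section \<open>A region attached to a large useful cap\<close>

lemma lowerhalf_downward_closed:
  "y \<in> lowerhalf i H \<Longrightarrow> hor i z = hor i y \<Longrightarrow> hgt i z \<le> hgt i y \<Longrightarrow> z \<in> lowerhalf i H"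
  by (force simp: lowerhalf_def)

definition cap_witness ::
    "(real^'n::finite) set \<Rightarrow> 'n \<times> bool \<Rightarrow> real \<Rightarrow> (real^'n) \<times> (real^'n) set
      \<Rightarrow> real^'n \<Rightarrow> (real^'n) set \<Rightarrow> (real^'n) \<times> (real^'n) set \<Rightarrow> bool" where
  "cap_witness K i \<epsilon> pH x R yH \<longleftrightarrow>
     R \<subseteq> (\<lambda>\<tau>. x + (1/3) *\<^sub>R \<tau>) ` {\<tau>. x + \<tau> \<in> Kdual K i \<epsilon> \<and> x - \<tau> \<in> Kdual K i \<epsilon>}
     \<and> (\<forall>y\<in>Kdual K i \<epsilon>. 2 *\<^sub>R x - y \<in> Kdual K i \<epsilon> \<longrightarrow> y \<in> lowerhalf i (vshift i \<epsilon> (snd pH)))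
     \<and> yH \<in> ovbd i (Kdual K i \<epsilon>) \<and> hor i (fst yH) = hor i x \<and> hgt i (fst yH) \<le> hgt i x
     \<and> compact R \<and> R \<subseteq> Kdual K i \<epsilon> \<and> (\<forall>z\<in>R. \<forall>s>\<epsilon>. z - s *\<^sub>R upv i \<notin> Kdual K i \<epsilon>)
     \<and> (\<forall>z\<in>R. \<forall>k. k \<noteq> fst i \<longrightarrow> \<bar>z $ k\<bar> \<le> 3)"

lemma reflection_in_convex:
  fixes U :: "(real^'n::finite) set"
  assumes "convex U" "x + a \<in> U" "x - a \<in> U" "x' + b \<in> U"
    and "x + (1/3) *\<^sub>R a = x' + (1/3) *\<^sub>R b"
  shows "2 *\<^sub>R x - x' \<in> U"
proof -
  have x': "x' = x + (1/3) *\<^sub>R a - (1/3) *\<^sub>R b" using assms(5) by (simp add: algebra_simps)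
  have "2 *\<^sub>R x - x' = (1/2) *\<^sub>R (x' + b) + (1/2) *\<^sub>R (x - a)"
    unfolding x' by (simp add: vec_eq_iff field_simps)
  also have "\<dots> \<in> U" using assms by (intro convexD) auto
  finally show ?thesis .
qed

lemma cap_witness_stabs:
  assumes a: "cap_witness K i \<epsilon> pa xa Ra ya" and b: "cap_witness K i \<epsilon> pb xb Rb yb"
    and meet: "Ra \<inter> Rb \<noteq> {}"
  shows "yb \<in> Cap i (Kdual K i \<epsilon>) \<epsilon> pa"
proof -
  let ?U = "Kdual K i \<epsilon>"
  obtain z where "z \<in> Ra" "z \<in> Rb" using meet by blast
  then have za: "z \<in> (\<lambda>\<tau>. xa + (1/3) *\<^sub>R \<tau>) ` {\<tau>. xa + \<tau> \<in> ?U \<and> xa - \<tau> \<in> ?U}"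
    and zb: "z \<in> (\<lambda>\<tau>. xb + (1/3) *\<^sub>R \<tau>) ` {\<tau>. xb + \<tau> \<in> ?U \<and> xb - \<tau> \<in> ?U}"
    using a b unfolding cap_witness_def by blast+
  obtain \<tau>a where \<tau>a: "xa + \<tau>a \<in> ?U" "xa - \<tau>a \<in> ?U" "z = xa + (1/3) *\<^sub>R \<tau>a"
    using za by blast
  obtain \<tau>b where \<tau>b: "xb + \<tau>b \<in> ?U" "xb - \<tau>b \<in> ?U" "z = xb + (1/3) *\<^sub>R \<tau>b"
    using zb by blast
  have eq: "xa + (1/3) *\<^sub>R \<tau>a = xb + (1/3) *\<^sub>R \<tau>b" using \<tau>a(3) \<tau>b(3) by simp
  have "xb = (1/2) *\<^sub>R (xb + \<tau>b) + (1/2) *\<^sub>R (xb - \<tau>b)"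
    by (simp add: vec_eq_iff field_simps)
  then have "xb \<in> ?U"
    using convexD[OF convex_Kdual \<tau>b(1,2), of "1/2" "1/2"] by simp
  moreover have "2 *\<^sub>R xa - xb \<in> ?U"
    using reflection_in_convex[OF convex_Kdual \<tau>a(1,2) \<tau>b(1) eq] .
  ultimately have "xb \<in> lowerhalf i (vshift i \<epsilon> (snd pa))"
    using a unfolding cap_witness_def by blast
  then show ?thesis
    using b lowerhalf_downward_closed unfolding cap_witness_def Cap_def by blast
qed

locale large_useful_cap = useful_cap K \<epsilon> i pH q G
  for K :: "(real^'n::finite) set" and \<epsilon> i pH q G +
  fixes t :: real
  assumes t: "t > 0" and large: "ennreal t \<le> area i shadow"
begin

lemma area_shadow_nonzero: "area i shadow \<noteq> 0"
  using t large by (metis ennreal_eq_0_iff ennreal_le_iff2 le_zero_eq linorder_not_le)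

definition center :: "real^'n" where
  "center = (SOME c. c \<in> shadow \<and> (\<forall>x\<in>shadow. c - (1 / real CARD('n)) *\<^sub>R (x - c) \<in> shadow))"

lemma center_in_shadow: "center \<in> shadow"
  and center_reflect: "x \<in> shadow \<Longrightarrow> center - (1 / real CARD('n)) *\<^sub>R (x - center) \<in> shadow"
proof -
  have "\<not> (\<exists>a \<beta>. a \<noteq> 0 \<and> a $ fst i = 0 \<and> (\<forall>x\<in>shadow. a \<bullet> x = \<beta>))"
    using area_eq_0_if_in_hyperplane[OF compact_shadow] shadow_nth_fst area_shadow_nonzero by blast
  then have "\<exists>c\<in>shadow. \<forall>x\<in>shadow. c - (1 / real CARD('n)) *\<^sub>R (x - c) \<in> shadow"
    using exists_center_of_symmetry[OF compact_shadow convex_shadow _ _] hor_p_in_shadow shadow_nth_fst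
    by blast
  then have "center \<in> shadow \<and> (\<forall>x\<in>shadow. center - (1 / real CARD('n)) *\<^sub>R (x - center) \<in> shadow)"
    unfolding center_def by (rule someI2_bex) blast
  then show "center \<in> shadow" "x \<in> shadow \<Longrightarrow> center - (1 / real CARD('n)) *\<^sub>R (x - center) \<in> shadow"
    by auto
qed

lemma shadow_scaled_at_center:
  assumes y: "y \<in> shadow" and \<mu>: "\<bar>\<mu>\<bar> \<le> 1"
  shows "center + (\<mu> / real CARD('n)) *\<^sub>R (y - center) \<in> shadow"
proof -
  let ?d = "real CARD('n)"
  have "center + (1/?d) *\<^sub>R (y - center) = (1 - 1/?d) *\<^sub>R center + (1/?d) *\<^sub>R y"
    by (simp add: algebra_simps)
  also have "\<dots> \<in> shadow"
    using convex_shadow center_in_shadow y by (intro convexD) auto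
  finally have plus: "center + (1/?d) *\<^sub>R (y - center) \<in> shadow" .
  have "center + (\<mu> / ?d) *\<^sub>R (y - center)
      = ((1 + \<mu>)/2) *\<^sub>R (center + (1/?d) *\<^sub>R (y - center))
        + ((1 - \<mu>)/2) *\<^sub>R (center - (1/?d) *\<^sub>R (y - center))"
    by (simp add: vec_eq_iff field_simps)
  also have "\<dots> \<in> shadow"
    using convex_shadow plus center_reflect[OF y] \<mu> by (intro convexD) (auto simp: add_divide_distrib[symmetric])
  finally show ?thesis .
qed

lemma shadow_mixture:
  assumes "y1 \<in> shadow" "y2 \<in> shadow" "\<bar>\<mu>1\<bar> \<le> 1" "\<bar>\<mu>2\<bar> \<le> 1"
  shows "center + (\<mu>1 / (2 * real CARD('n))) *\<^sub>R (y1 - center)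
           + (\<mu>2 / (2 * real CARD('n))) *\<^sub>R (y2 - center) \<in> shadow"
proof -
  have "center + (\<mu>1 / (2 * real CARD('n))) *\<^sub>R (y1 - center) + (\<mu>2 / (2 * real CARD('n))) *\<^sub>R (y2 - center)
      = (1/2) *\<^sub>R (center + (\<mu>1 / real CARD('n)) *\<^sub>R (y1 - center))
        + (1/2) *\<^sub>R (center + (\<mu>2 / real CARD('n)) *\<^sub>R (y2 - center))"
    by (simp add: vec_eq_iff field_simps)
  also have "\<dots> \<in> shadow"
    using assms by (intro convexD convex_shadow shadow_scaled_at_center) auto
  finally show ?thesis .
qed

definition mid :: "real^'n" where
  "mid = (1/2) *\<^sub>R (fst pH + (center + (qstar center + \<epsilon>) *\<^sub>R upv i))"

definition tau :: "real^'n \<Rightarrow> real \<Rightarrow> real^'n" where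
  "tau y v = (1/(8*real CARD('n))) *\<^sub>R (y - center)
     + (hor i q \<bullet> ((1/(8*real CARD('n))) *\<^sub>R (y - center)) + v) *\<^sub>R upv i"

lemma hgt_mid: "hgt i mid = qstar (hor i mid) + \<epsilon>/2"
  using hgt_p hor_shadow[OF center_in_shadow] hgt_hor[of i center]
  by (simp add: mid_def qstar_def inner_add_right field_simps)

lemma mid_plus_tau_eq:
  assumes y: "y \<in> shadow" and d': "d' \<in> shadow" and \<theta>: "\<theta> = 1/2 + \<sigma> * v / \<epsilon>"
    and thd: "\<theta> *\<^sub>R d' = \<theta> *\<^sub>R center + (\<theta> - 1/2) *\<^sub>R (hor i (fst pH) - center)
                         + \<sigma> *\<^sub>R ((1/(8*real CARD('n))) *\<^sub>R (y - center))"
  shows "mid + \<sigma> *\<^sub>R tau y v = (1 - \<theta>) *\<^sub>R fst pH + \<theta> *\<^sub>R (d' + (qstar d' + \<epsilon>) *\<^sub>R upv i)"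
    (is "_ = ?Q")
proof -
  define ps where "ps = hor i (fst pH)"
  define w where "w = (1/(8*real CARD('n))) *\<^sub>R (y - center)"
  have c: "hor i center = center" "hgt i center = 0"
    using hor_shadow[OF center_in_shadow] hgt_hor[of i center] by auto
  have d'': "hor i d' = d'" "hgt i d' = 0"
    using hor_shadow[OF d'] hgt_hor[of i d'] by auto
  have yy: "hor i y = y" "hgt i y = 0"
    using hor_shadow[OF y] hgt_hor[of i y] by auto
  have "hor i ?Q = (1 - \<theta>) *\<^sub>R ps + \<theta> *\<^sub>R d'" by (simp add: ps_def d'')
  also have "\<dots> = (1 - \<theta>) *\<^sub>R ps + (\<theta> *\<^sub>R center + (\<theta> - 1/2) *\<^sub>R (ps - center) + \<sigma> *\<^sub>R w)"
    by (simp only: thd ps_def w_def)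
  also have "\<dots> = hor i (mid + \<sigma> *\<^sub>R tau y v)"
    by (simp add: mid_def tau_def ps_def c yy w_def vec_eq_iff field_simps)
  finally have "hor i ?Q = hor i (mid + \<sigma> *\<^sub>R tau y v)" .
  moreover have "hgt i ?Q = hgt i (mid + \<sigma> *\<^sub>R tau y v)"
  proof -
    have "hor i q \<bullet> (\<theta> *\<^sub>R d') = \<theta> * (hor i q \<bullet> center) + (\<theta> - 1/2) * (hor i q \<bullet> ps - hor i q \<bullet> center)
        + \<sigma> * (hor i q \<bullet> w)"
      unfolding thd by (simp add: ps_def w_def inner_add_right inner_diff_right)
    moreover have "hgt i ?Q = (1 - \<theta>) * qstar ps + \<theta> * (qstar d' + \<epsilon>)"
      using hgt_p by (simp add: ps_def d'')
    ultimately have "hgt i ?Q = (1/2) * (qstar ps + qstar center + \<epsilon>) + \<sigma> * (hor i q \<bullet> w + v)"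
      using eps by (simp add: qstar_def \<theta> algebra_simps)
    also have "\<dots> = hgt i (mid + \<sigma> *\<^sub>R tau y v)"
      using hgt_p by (simp add: mid_def tau_def ps_def c yy w_def field_simps)
    finally show ?thesis .
  qed
  ultimately show ?thesis using vec_eq_hor_hgtI by metis
qed

text \<open>\<open>mid \<plusminus> tau y v\<close> is the convex combination of \<open>p\<close> and a point of the cap base
  with weights \<open>1 - \<theta>\<close>, \<open>\<theta>\<close>, where \<open>\<theta> = 1/2 \<plusminus> v/\<epsilon>\<close>; its shadow lies in the shadow of
  the base by \<open>shadow_mixture\<close>.\<close>
lemma mid_plus_tau_in_U:
  assumes y: "y \<in> shadow" and v: "\<bar>v\<bar> \<le> \<epsilon> / (8*real CARD('n))" and \<sigma>: "\<bar>\<sigma>\<bar> = 1"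
  shows "mid + \<sigma> *\<^sub>R tau y v \<in> U"
proof -
  let ?d = "real CARD('n)"
  define \<theta> where "\<theta> = 1/2 + \<sigma> * v / \<epsilon>"
  have sv: "\<bar>\<sigma> * v / \<epsilon>\<bar> \<le> 1 / (8*?d)"
    using v \<sigma> eps by (simp add: abs_mult abs_div divide_le_eq field_simps)
  moreover have "1 / (8*?d) \<le> 1/8" by (simp add: field_simps)
  ultimately have "\<bar>\<sigma> * v / \<epsilon>\<bar> \<le> 1/8" by linarith
  then have th: "3/8 \<le> \<theta>" "\<theta> \<le> 5/8" unfolding \<theta>_def by (auto simp only: abs_le_iff)
  define d' where "d' = center + ((2*?d*(\<theta> - 1/2)/\<theta>) / (2*?d)) *\<^sub>R (hor i (fst pH) - center)
                         + ((\<sigma>/(4*\<theta>)) / (2*?d)) *\<^sub>R (y - center)"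
  have "d' \<in> shadow" unfolding d'_def
  proof (rule shadow_mixture[OF hor_p_in_shadow y])
    have "\<bar>2*?d*(\<theta> - 1/2)\<bar> = 2*?d*\<bar>\<sigma> * v / \<epsilon>\<bar>" by (simp add: \<theta>_def abs_mult)
    also have "\<dots> \<le> 2*?d*(1/(8*?d))" using sv by (intro mult_left_mono) auto
    finally have "\<bar>2*?d*(\<theta> - 1/2)\<bar> \<le> 1/4" by simp
    then show "\<bar>2*?d*(\<theta> - 1/2)/\<theta>\<bar> \<le> 1"
      using th by (simp add: abs_div divide_le_eq)
    show "\<bar>\<sigma>/(4*\<theta>)\<bar> \<le> 1"
      using th \<sigma> by (simp add: abs_div abs_mult divide_le_eq)
  qed
  have "\<theta> \<noteq> 0" "?d \<noteq> 0" using th by auto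
  then have "\<theta> *\<^sub>R d' = \<theta> *\<^sub>R center + (\<theta> - 1/2) *\<^sub>R (hor i (fst pH) - center)
                      + \<sigma> *\<^sub>R ((1/(8*?d)) *\<^sub>R (y - center))"
    by (simp add: d'_def vec_eq_iff field_simps)
  then have "mid + \<sigma> *\<^sub>R tau y v = (1 - \<theta>) *\<^sub>R fst pH + \<theta> *\<^sub>R (d' + (qstar d' + \<epsilon>) *\<^sub>R upv i)"
    by (rule mid_plus_tau_eq[OF y \<open>d' \<in> shadow\<close> \<theta>_def])
  also have "\<dots> \<in> U"
    using convex_Kdual[of K i \<epsilon>] p_in_U shadow_lift_in_U[OF \<open>d' \<in> shadow\<close>] th by (intro convexD) auto
  finally show ?thesis .
qed

definition sym_body :: "(real^'n) set" where
  "sym_body = {tau y v | y v. y \<in> shadow \<and> v \<in> {-(\<epsilon>/(8*real CARD('n)))..\<epsilon>/(8*real CARD('n))}}"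

lemma mid_pm_sym_body: "\<tau> \<in> sym_body \<Longrightarrow> mid + \<tau> \<in> U \<and> mid - \<tau> \<in> U"
  using mid_plus_tau_in_U[of _ _ 1] mid_plus_tau_in_U[of _ _ "-1"] by (auto simp: sym_body_def)

lemma mid_in_U: "mid \<in> U"
  using mid_plus_tau_in_U[OF center_in_shadow, of 0 1] eps by (simp add: tau_def)

lemma compact_sym_body: "compact sym_body"
proof -
  let ?I = "{-(\<epsilon>/(8*real CARD('n)))..\<epsilon>/(8*real CARD('n))}"
  have eq: "sym_body = (\<lambda>x. tau (fst x) (snd x)) ` (shadow \<times> ?I)"
  proof (intro set_eqI iffI)
    fix z assume "z \<in> sym_body"
    then obtain y v where "y \<in> shadow" "v \<in> ?I" "z = tau y v" by (auto simp: sym_body_def)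
    then show "z \<in> (\<lambda>x. tau (fst x) (snd x)) ` (shadow \<times> ?I)" by (intro image_eqI[of _ _ "(y, v)"]) auto
  next
    fix z assume "z \<in> (\<lambda>x. tau (fst x) (snd x)) ` (shadow \<times> ?I)"
    then obtain y v where "y \<in> shadow" "v \<in> ?I" "z = tau y v" by auto
    then show "z \<in> sym_body" unfolding sym_body_def by blast
  qed
  have "continuous_on (shadow \<times> ?I) (\<lambda>x. tau (fst x) (snd x))"
    unfolding tau_def by (intro continuous_intros)
  then show ?thesis
    unfolding eq by (rule compact_continuous_image[OF _ compact_Times[OF compact_shadow compact_Icc]])
qed

text \<open>\<open>sym_body\<close> is an affine image, with factor \<open>1/(8d)\<close>, of the prism of height \<open>2\<epsilon>\<close> over
  the shadow.\<close>
lemma emeasure_sym_body: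
  "emeasure lebesgue sym_body = ennreal ((1/(8*real CARD('n)))^CARD('n) * (2*\<epsilon>)) * area i shadow"
proof -
  define m where "m = 1/(8*real CARD('n))"
  have m0: "m > 0" by (simp add: m_def)
  define T2 where "T2 = {y + (hor i q \<bullet> (y - center) + v) *\<^sub>R upv i | y v. y \<in> shadow \<and> v \<in> {-\<epsilon>..\<epsilon>}}"
  have T2: "emeasure lebesgue T2 = ennreal (2*\<epsilon>) * area i shadow"
    unfolding T2_def using shadow_nth_fst eps
    by (intro emeasure_prism[OF compact_shadow]) (auto intro!: continuous_intros)
  have tau_eq: "tau y v = m *\<^sub>R (y + (hor i q \<bullet> (y - center) + v / m) *\<^sub>R upv i) + (- m *\<^sub>R center)" for y v
    using m0 by (simp add: tau_def m_def algebra_simps)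
  have eq: "sym_body = (\<lambda>x. m *\<^sub>R x + (- m *\<^sub>R center)) ` T2"
  proof (intro set_eqI iffI)
    fix z assume "z \<in> sym_body"
    then obtain y v where y: "y \<in> shadow" and v: "v \<in> {-(\<epsilon>/(8*real CARD('n)))..\<epsilon>/(8*real CARD('n))}"
      and z: "z = tau y v"
      unfolding sym_body_def by blast
    have "v / m \<in> {-\<epsilon>..\<epsilon>}" using v m0 by (auto simp: m_def field_simps)
    then have "y + (hor i q \<bullet> (y - center) + v / m) *\<^sub>R upv i \<in> T2"
      unfolding T2_def using y by blast
    then show "z \<in> (\<lambda>x. m *\<^sub>R x + (- m *\<^sub>R center)) ` T2"
      unfolding z tau_eq by (rule imageI)
  next
    fix z assume "z \<in> (\<lambda>x. m *\<^sub>R x + (- m *\<^sub>R center)) ` T2"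
    then obtain y v where "y \<in> shadow" "v \<in> {-\<epsilon>..\<epsilon>}"
      "z = m *\<^sub>R (y + (hor i q \<bullet> (y - center) + v) *\<^sub>R upv i) + (- m *\<^sub>R center)"
      by (auto simp: T2_def)
    moreover have "m * v \<in> {-(\<epsilon>/(8*real CARD('n)))..\<epsilon>/(8*real CARD('n))}"
      using \<open>v \<in> {-\<epsilon>..\<epsilon>}\<close> m0 by (auto simp: m_def field_simps)
    ultimately show "z \<in> sym_body"
      unfolding sym_body_def using m0 by (auto simp: tau_eq intro!: exI[of _ "m * v"])
  qed
  have "emeasure lebesgue sym_body = \<bar>m\<bar> ^ DIM(real^'n) * emeasure lebesgue T2"
    unfolding eq by (rule emeasure_lebesgue_affine)
  also have "\<dots> = ennreal (m ^ CARD('n) * (2*\<epsilon>)) * area i shadow"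
    using m0 eps by (simp add: T2 ennreal_power ennreal_mult mult.assoc)
  finally show ?thesis by (simp add: m_def)
qed

lemma emeasure_sym_body_ge:
  "ennreal ((1/(8*real CARD('n)))^CARD('n) * (2*\<epsilon>) * t) \<le> emeasure lebesgue sym_body"
  unfolding emeasure_sym_body using eps t large
  by (simp add: ennreal_mult mult_left_mono)

text \<open>Since \<open>mid \<plusminus> sym_body \<subseteq> U\<close> and \<open>sym_body\<close> has positive volume, \<open>U\<close> has no vertical
  supporting hyperplane at the lowest point below \<open>mid\<close>.\<close>
lemma exists_ovbd_below_mid:
  "\<exists>yH \<in> ovbd i U. hor i (fst yH) = hor i mid \<and> hgt i (fst yH) \<le> hgt i mid"
proof -
  have "\<tau> \<le> \<epsilon>/2" if "0 \<le> \<tau>" "mid - \<tau> *\<^sub>R upv i \<in> U" for \<tau>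
    using qstar_le_hgt[OF that(2)] hgt_mid by simp
  then obtain \<tau> where \<tau>: "\<tau> \<ge> 0" "mid - \<tau> *\<^sub>R upv i \<in> U" "\<forall>s>0. mid - (\<tau> + s) *\<^sub>R upv i \<notin> U"
    using lowest_point_exists[OF closed_Kdual mid_in_U] by blast
  define w where "w = mid - \<tau> *\<^sub>R upv i"
  have "\<exists>H. (w, H) \<in> ovbd i U"
  proof (rule lowest_point_in_ovbd[OF convex_Kdual])
    show "w \<in> U" using \<tau> by (simp add: w_def)
    then show "w + upv i \<in> U" using Kdual_climb[of w K i \<epsilon> 1] by simp
    show "\<forall>s>0. w - s *\<^sub>R upv i \<notin> U" using \<tau>(3) by (simp add: w_def algebra_simps)
  next
    fix a :: "real^'n" assume a: "a \<noteq> 0" "a \<bullet> upv i = 0"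
    show "\<exists>y\<in>U. a \<bullet> y < a \<bullet> w"
    proof (rule ccontr)
      assume "\<not> (\<exists>y\<in>U. a \<bullet> y < a \<bullet> w)"
      then have le: "a \<bullet> mid \<le> a \<bullet> y" if "y \<in> U" for y
        using that a(2) by (force simp: w_def inner_diff_right)
      have "sym_body \<subseteq> {z. a \<bullet> z = 0}"
      proof
        fix z assume "z \<in> sym_body"
        from mid_pm_sym_body[OF this] have "a \<bullet> mid \<le> a \<bullet> (mid + z)" "a \<bullet> mid \<le> a \<bullet> (mid - z)"
          using le by auto
        then show "z \<in> {z. a \<bullet> z = 0}" by (simp add: inner_add_right inner_diff_right)
      qed
      then have "negligible sym_body"
        using negligible_hyperplane[of a 0] a(1) negligible_subset by blast
      then have "emeasure lebesgue sym_body = 0"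
        unfolding negligible_iff_null_sets by (rule null_setsD1)
      moreover have "(1/(8*real CARD('n)))^CARD('n) * (2*\<epsilon>) > 0" using eps by simp
      ultimately show False
        using area_shadow_nonzero by (simp add: emeasure_sym_body ennreal_eq_0_iff)
    qed
  qed
  then obtain H where "(w, H) \<in> ovbd i U" by blast
  then show ?thesis using \<tau>(1) by (intro bexI[of _ "(w, H)"]) (auto simp: w_def)
qed

lemma reflection_through_mid_in_cap:
  assumes "y \<in> U" "2 *\<^sub>R mid - y \<in> U"
  shows "y \<in> lowerhalf i (vshift i \<epsilon> (snd pH))"
proof -
  have "qstar (hor i (2 *\<^sub>R mid - y)) \<le> hgt i (2 *\<^sub>R mid - y)" by (rule qstar_le_hgt[OF assms(2)])
  then have "hgt i y \<le> qstar (hor i y) + \<epsilon>"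
    using hgt_mid by (simp add: qstar_def inner_diff_right algebra_simps)
  then show ?thesis by (simp add: snd_pH lowerhalf_vshift_dualh qstar_def)
qed

definition core :: "(real^'n) set" where
  "core = (\<lambda>\<tau>. mid + (1/3) *\<^sub>R \<tau>) ` sym_body"

lemma core_reflection_in_U: "z \<in> core \<Longrightarrow> z \<in> U \<and> 2 *\<^sub>R mid - z \<in> U"
proof -
  assume "z \<in> core"
  then obtain \<tau> where \<tau>: "\<tau> \<in> sym_body" "z = mid + (1/3) *\<^sub>R \<tau>" by (auto simp: core_def)
  have "z = (2/3) *\<^sub>R mid + (1/3) *\<^sub>R (mid + \<tau>)" using \<tau>(2) by (simp add: vec_eq_iff field_simps)
  also have "\<dots> \<in> U"
    using mid_pm_sym_body[OF \<tau>(1)] mid_in_U by (intro convexD convex_Kdual) auto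
  finally have "z \<in> U" .
  have "2 *\<^sub>R mid - z = (2/3) *\<^sub>R mid + (1/3) *\<^sub>R (mid - \<tau>)" using \<tau>(2) by (simp add: vec_eq_iff field_simps)
  also have "\<dots> \<in> U"
    using mid_pm_sym_body[OF \<tau>(1)] mid_in_U by (intro convexD convex_Kdual) auto
  finally show ?thesis using \<open>z \<in> U\<close> by simp
qed

lemma core_below_cap: "z \<in> core \<Longrightarrow> hgt i z \<le> qstar (hor i z) + \<epsilon>"
  using core_reflection_in_U reflection_through_mid_in_cap
  by (fastforce simp: snd_pH lowerhalf_vshift_dualh qstar_def)

lemma cap_witness_core:
  obtains yH where "cap_witness K i \<epsilon> pH mid core yH"
proof -
  obtain yH where yH: "yH \<in> ovbd i U" "hor i (fst yH) = hor i mid" "hgt i (fst yH) \<le> hgt i mid"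
    using exists_ovbd_below_mid by blast
  have "z - s *\<^sub>R upv i \<notin> U" if "z \<in> core" "s > \<epsilon>" for z s
    using qstar_le_hgt[of "z - s *\<^sub>R upv i"] core_below_cap[OF that(1)] that(2) by auto
  moreover have "compact core"
    unfolding core_def by (intro compact_continuous_image compact_sym_body continuous_intros)
  moreover have "core \<subseteq> (\<lambda>\<tau>. mid + (1/3) *\<^sub>R \<tau>) ` {\<tau>. mid + \<tau> \<in> U \<and> mid - \<tau> \<in> U}"
    unfolding core_def using mid_pm_sym_body by blast
  ultimately have "cap_witness K i \<epsilon> pH mid core yH"
    unfolding cap_witness_def
    using yH core_reflection_in_U reflection_through_mid_in_cap core_below_cap cap_abs_nth_le
    by blast
  then show thesis by (rule that)
qed

lemma emeasure_core_ge:
  "ennreal ((1/3)^CARD('n) * (1/(8*real CARD('n)))^CARD('n) * 2 * \<epsilon> * t) \<le> emeasure lebesgue core"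
proof -
  have "core = (\<lambda>x. (1/3) *\<^sub>R x + mid) ` sym_body" by (auto simp: core_def add.commute)
  then have "emeasure lebesgue core = ennreal ((1/3)^CARD('n)) * emeasure lebesgue sym_body"
    by (simp add: emeasure_lebesgue_affine ennreal_power)
  moreover have "ennreal ((1/3)^CARD('n)) * ennreal ((1/(8*real CARD('n)))^CARD('n) * (2*\<epsilon>) * t)
      \<le> ennreal ((1/3)^CARD('n)) * emeasure lebesgue sym_body"
    by (intro mult_left_mono emeasure_sym_body_ge) simp
  ultimately show ?thesis using eps t by (simp add: ennreal_mult' mult.assoc)
qed

end

lemma exists_cap_witness:
  fixes K :: "(real^'n::finite) set"
  assumes K: "compact K" "convex K" and eps: "\<epsilon> > 0" and t: "t > 0"
    and pH: "pH \<in> ovbd i (Kdual K i \<epsilon>)" and "useful K i \<epsilon> pH" and "large K i \<epsilon> t pH"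
  shows "\<exists>x R yH. cap_witness K i \<epsilon> pH x R yH
           \<and> ennreal ((1/3)^CARD('n) * (1/(8*real CARD('n)))^CARD('n) * 2 * \<epsilon> * t) \<le> emeasure lebesgue R"
proof -
  obtain q G where "(q, G) \<in> ovbd i (Kmain K i \<epsilon>)" "snd pH = dualh i q" "q \<in> lowbd i (Kal K i \<epsilon>)"
    using \<open>useful K i \<epsilon> pH\<close> unfolding useful_def by blast
  then interpret large_useful_cap K \<epsilon> i pH q G t
    using assms by unfold_locales (auto simp: large_def useful_cap.shadow_def[OF useful_cap.intro])
  obtain yH where "cap_witness K i \<epsilon> pH mid core yH" by (rule cap_witness_core)
  then show ?thesis using emeasure_core_ge by blast
qed

section \<open>Packing and stabbing\<close>

lemma emeasure_box_slab:
  fixes j :: "'n::finite"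
  assumes "a \<le> b" "0 \<le> r"
  shows "emeasure lebesgue (cbox (\<chi> k. if k = j then a else -r) (\<chi> k. if k = j then b else r))
    = ennreal ((b - a) * (2*r) ^ (CARD('n) - 1))"
proof -
  let ?l = "(\<chi> k. if k = j then a else -r) :: real^'n" and ?u = "(\<chi> k. if k = j then b else r) :: real^'n"
  have "\<forall>bb\<in>Basis. ?l \<bullet> bb \<le> ?u \<bullet> bb" using assms by (auto simp: Basis_real_vec_eq inner_axis)
  then have "emeasure lebesgue (cbox ?l ?u) = ennreal (\<Prod>bb\<in>Basis. (?u - ?l) \<bullet> bb)"
    by (simp add: emeasure_lborel_cbox_eq)
  also have "(\<Prod>bb\<in>Basis. (?u - ?l) \<bullet> bb) = (\<Prod>k\<in>UNIV. ?u $ k - ?l $ k)"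
    unfolding Basis_real_vec_eq by (subst prod.reindex) (auto simp: inj_on_def axis_eq_axis inner_axis)
  also have "\<dots> = (?u $ j - ?l $ j) * (\<Prod>k\<in>UNIV - {j}. ?u $ k - ?l $ k)"
    by (rule prod.remove) auto
  also have "(\<Prod>k\<in>UNIV - {j}. ?u $ k - ?l $ k) = (\<Prod>k\<in>UNIV - {j}. 2*r)"
    by (intro prod.cong) auto
  finally show ?thesis by (simp add: card_Diff_singleton)
qed

lemma le_of_forall_nat_mult_le:
  fixes X C B :: real
  assumes "\<And>m::nat. real m * X \<le> B + real m * C"
  shows "X \<le> C"
proof (rule ccontr)
  assume "\<not> X \<le> C"
  then have d: "X - C > 0" by simp
  obtain n :: nat where n: "\<bar>B\<bar> / (X - C) < real n" using reals_Archimedean2 by blast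
  have "real (n + 1) * (X - C) > \<bar>B\<bar>" using n d by (simp add: divide_less_eq algebra_simps)
  moreover have "real (n + 1) * (X - C) \<le> B" using assms[of "n + 1"] by (simp add: algebra_simps)
  ultimately show False by linarith
qed

lemma vertical_translates_disjoint:
  assumes chord: "\<And>z s. z \<in> Z \<Longrightarrow> z + s *\<^sub>R upv i \<in> Z \<Longrightarrow> \<bar>s\<bar> \<le> \<epsilon>"
    and eps: "0 < \<epsilon>" and "k < k'"
  shows "(\<lambda>z. z + (2 * \<epsilon> * real k) *\<^sub>R upv i) ` Z \<inter> (\<lambda>z. z + (2 * \<epsilon> * real k') *\<^sub>R upv i) ` Z = {}"
proof (rule ccontr)
  assume "(\<lambda>z. z + (2 * \<epsilon> * real k) *\<^sub>R upv i) ` Z \<inter> (\<lambda>z. z + (2 * \<epsilon> * real k') *\<^sub>R upv i) ` Z \<noteq> {}"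
  then obtain z1 z2 where z: "z1 \<in> Z" "z2 \<in> Z"
      "z1 + (2 * \<epsilon> * real k) *\<^sub>R upv i = z2 + (2 * \<epsilon> * real k') *\<^sub>R upv i"
    by auto
  then have "z2 + (2 * \<epsilon> * (real k' - real k)) *\<^sub>R upv i = z1" by (simp add: algebra_simps)
  then have "\<bar>2 * \<epsilon> * (real k' - real k)\<bar> \<le> \<epsilon>" using chord z(1,2) by metis
  moreover have "real k' - real k \<ge> 1" using \<open>k < k'\<close> by linarith
  ultimately show False using eps by (simp add: abs_mult)
qed

lemma vertical_translate_subset_cbox:
  assumes B: "\<And>z. z \<in> Z \<Longrightarrow> \<bar>z $ fst i\<bar> \<le> B"
    and box: "\<And>z k. z \<in> Z \<Longrightarrow> k \<noteq> fst i \<Longrightarrow> \<bar>z $ k\<bar> \<le> r"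
    and s: "0 \<le> s" "s \<le> S"
  shows "(\<lambda>z. z + s *\<^sub>R upv i) ` Z
           \<subseteq> cbox (\<chi> k. if k = fst i then -(B + S) else -r) (\<chi> k. if k = fst i then B + S else r)"
proof
  fix y assume "y \<in> (\<lambda>z. z + s *\<^sub>R upv i) ` Z"
  then obtain z where z: "z \<in> Z" "y = z + s *\<^sub>R upv i" by auto
  have "y $ fst i = z $ fst i + (if snd i then -1 else 1) * s"
    by (simp add: z(2) upv_axis)
  then have "\<bar>y $ fst i - z $ fst i\<bar> = s" using s by (cases "snd i") simp_all
  moreover have "\<bar>y $ fst i\<bar> \<le> \<bar>z $ fst i\<bar> + \<bar>y $ fst i - z $ fst i\<bar>"
    using abs_triangle_ineq[of "z $ fst i" "y $ fst i - z $ fst i"] by simp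
  ultimately have "\<bar>y $ fst i\<bar> \<le> B + S" using s B[OF z(1)] by linarith
  moreover have "- r \<le> y $ k" "y $ k \<le> r" if "k \<noteq> fst i" for k
    using that box[OF z(1), of k] by (simp_all add: z(2) upv_axis axis_def abs_le_iff)
  ultimately show "y \<in> cbox (\<chi> k. if k = fst i then -(B + S) else -r) (\<chi> k. if k = fst i then B + S else r)"
    by (simp add: mem_box_cart abs_le_iff)
qed

text \<open>The translates of \<open>Z\<close> by \<open>2\<epsilon>k\<close> in the vertical direction, \<open>k < m\<close>, are pairwise
  disjoint and lie in a box of height \<open>2B + 4\<epsilon>m\<close>.\<close>
lemma mult_emeasure_le_of_short_vertical_chords:
  fixes Z :: "(real^'n::finite) set"
  assumes Z: "compact Z" and r: "0 \<le> r" and eps: "0 < \<epsilon>" and B: "0 \<le> B"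
    and bound: "\<And>z. z \<in> Z \<Longrightarrow> \<bar>z $ fst i\<bar> \<le> B"
    and box: "\<And>z k. z \<in> Z \<Longrightarrow> k \<noteq> fst i \<Longrightarrow> \<bar>z $ k\<bar> \<le> r"
    and chord: "\<And>z s. z \<in> Z \<Longrightarrow> z + s *\<^sub>R upv i \<in> Z \<Longrightarrow> \<bar>s\<bar> \<le> \<epsilon>"
  shows "of_nat m * emeasure lebesgue Z \<le> ennreal ((2*B + 4*\<epsilon>*real m) * (2*r) ^ (CARD('n) - 1))"
proof -
  define Zk where "Zk k = (\<lambda>z. z + (2 * \<epsilon> * real k) *\<^sub>R upv i) ` Z" for k :: nat
  have "emeasure lebesgue (Zk k) = emeasure lebesgue Z" for k
    using emeasure_lebesgue_affine[of 1 "(2 * \<epsilon> * real k) *\<^sub>R upv i" Z] by (simp add: Zk_def)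
  then have "of_nat m * emeasure lebesgue Z = (\<Sum>k<m. emeasure lebesgue (Zk k))" by simp
  also have "\<dots> = emeasure lebesgue (\<Union>k<m. Zk k)"
  proof (rule sum_emeasure)
    have "compact (Zk k)" for k
      unfolding Zk_def by (intro compact_continuous_image Z continuous_intros)
    then show "Zk ` {..<m} \<subseteq> sets lebesgue" by (auto simp: compact_imp_closed borel_closed)
    have "Zk k \<inter> Zk k' = {}" if "k < k'" for k k'
      unfolding Zk_def using vertical_translates_disjoint[OF chord eps that] .
    then show "disjoint_family_on Zk {..<m}"
      unfolding disjoint_family_on_def by (metis Int_commute linorder_neqE_nat)
  qed simp
  also have "\<dots> \<le> emeasure lebesgue (cbox (\<chi> k. if k = fst i then -(B + 2*\<epsilon>*real m) else -r)
                                          (\<chi> k. if k = fst i then B + 2*\<epsilon>*real m else r))"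
    unfolding Zk_def using bound box eps
    by (intro emeasure_mono UN_least vertical_translate_subset_cbox) auto
  also have "\<dots> = ennreal ((2*B + 4*\<epsilon>*real m) * (2*r) ^ (CARD('n) - 1))"
    using B eps r by (subst emeasure_box_slab) (auto simp: algebra_simps)
  finally show ?thesis .
qed

lemma emeasure_le_of_short_vertical_chords:
  fixes Z :: "(real^'n::finite) set"
  assumes Z: "compact Z" and r: "0 \<le> r" and eps: "0 < \<epsilon>"
    and box: "\<And>z k. z \<in> Z \<Longrightarrow> k \<noteq> fst i \<Longrightarrow> \<bar>z $ k\<bar> \<le> r"
    and chord: "\<And>z s. z \<in> Z \<Longrightarrow> z + s *\<^sub>R upv i \<in> Z \<Longrightarrow> \<bar>s\<bar> \<le> \<epsilon>"
  shows "emeasure lebesgue Z \<le> ennreal (4 * \<epsilon> * (2*r) ^ (CARD('n) - 1))"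
proof -
  obtain B where B: "\<And>z. z \<in> Z \<Longrightarrow> \<bar>z $ fst i\<bar> \<le> B" "B \<ge> 0"
    using compact_imp_bounded[OF Z] component_le_norm_cart unfolding bounded_iff
    by (metis abs_ge_zero order_trans)
  have "emeasure lborel Z < \<infinity>" by (rule emeasure_bounded_finite[OF compact_imp_bounded[OF Z]])
  moreover have "Z \<in> sets lborel" using Z by (simp add: compact_imp_closed borel_closed)
  ultimately have "emeasure lebesgue Z \<noteq> \<infinity>" by simp
  define V where "V = enn2real (emeasure lebesgue Z)"
  have eV: "emeasure lebesgue Z = ennreal V"
    using \<open>emeasure lebesgue Z \<noteq> \<infinity>\<close> by (simp add: V_def ennreal_enn2real_if)
  have V0: "V \<ge> 0" by (simp add: V_def)
  have "real m * V \<le> 2 * B * (2*r) ^ (CARD('n) - 1) + real m * (4 * \<epsilon> * (2*r) ^ (CARD('n) - 1))"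
    for m :: nat
  proof -
    have "ennreal (real m * V) \<le> ennreal ((2*B + 4*\<epsilon>*real m) * (2*r) ^ (CARD('n) - 1))"
      using mult_emeasure_le_of_short_vertical_chords[OF Z r eps B(2) B(1) box chord, where m = m]
      by (simp add: eV ennreal_mult' V0 ennreal_of_nat_eq_real_of_nat)
    then have "real m * V \<le> (2*B + 4*\<epsilon>*real m) * (2*r) ^ (CARD('n) - 1)"
      using B(2) eps r by (subst (asm) ennreal_le_iff) auto
    then show ?thesis by (simp add: algebra_simps)
  qed
  then have "V \<le> 4 * \<epsilon> * (2*r) ^ (CARD('n) - 1)" by (rule le_of_forall_nat_mult_le)
  then show ?thesis unfolding eV by (rule ennreal_leI)
qed

lemma short_vertical_chords_if_thin:
  assumes "Z \<subseteq> U" and thin: "\<And>z s. z \<in> Z \<Longrightarrow> s > \<epsilon> \<Longrightarrow> z - s *\<^sub>R upv i \<notin> U"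
    and z: "z \<in> Z" "z + s *\<^sub>R upv i \<in> Z"
  shows "\<bar>s\<bar> \<le> \<epsilon>"
proof (rule ccontr)
  assume "\<not> \<bar>s\<bar> \<le> \<epsilon>"
  then consider "s > \<epsilon>" | "- s > \<epsilon>" by linarith
  then show False
  proof cases
    case 1
    then have "(z + s *\<^sub>R upv i) - s *\<^sub>R upv i \<notin> U" using thin z(2) by blast
    then show False using z(1) \<open>Z \<subseteq> U\<close> by auto
  next
    case 2
    then have "z - (- s) *\<^sub>R upv i \<notin> U" using thin z(1) by blast
    then show False using z(2) \<open>Z \<subseteq> U\<close> by auto
  qed
qed

lemma card_disjoint_cap_witnesses_le:
  fixes K :: "(real^'n::finite) set"
  assumes J: "finite J" "disjoint_family_on R J"
    and wit: "\<And>a. a \<in> J \<Longrightarrow> cap_witness K i \<epsilon> a (x a) (R a) (y a)"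
    and vol: "\<And>a. a \<in> J \<Longrightarrow> ennreal m \<le> emeasure lebesgue (R a)"
    and eps: "\<epsilon> > 0" and m: "m \<ge> 0"
  shows "real (card J) * m \<le> 4 * \<epsilon> * 6 ^ (CARD('n) - 1)"
proof -
  define Z where "Z = (\<Union>a\<in>J. R a)"
  have R: "compact (R a)" "R a \<subseteq> Kdual K i \<epsilon>"
    "\<And>z s. z \<in> R a \<Longrightarrow> s > \<epsilon> \<Longrightarrow> z - s *\<^sub>R upv i \<notin> Kdual K i \<epsilon>"
    "\<And>z k. z \<in> R a \<Longrightarrow> k \<noteq> fst i \<Longrightarrow> \<bar>z $ k\<bar> \<le> 3" if "a \<in> J" for a
    using wit[OF that] unfolding cap_witness_def by blast+
  have "ennreal (real (card J) * m) = (\<Sum>a\<in>J. ennreal m)"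
    using m by (simp add: ennreal_mult ennreal_of_nat_eq_real_of_nat)
  also have "\<dots> \<le> (\<Sum>a\<in>J. emeasure lebesgue (R a))" by (intro sum_mono vol)
  also have "\<dots> = emeasure lebesgue Z" unfolding Z_def
    using J R(1) by (intro sum_emeasure) (auto simp: compact_imp_closed borel_closed)
  also have "\<dots> \<le> ennreal (4 * \<epsilon> * (2*3) ^ (CARD('n) - 1))"
  proof (rule emeasure_le_of_short_vertical_chords)
    show "compact Z" unfolding Z_def using J(1) R(1) by (intro compact_UN) auto
    show "\<bar>z $ k\<bar> \<le> 3" if "z \<in> Z" "k \<noteq> fst i" for z k using that R(4) by (auto simp: Z_def)
    show "\<bar>s\<bar> \<le> \<epsilon>" if "z \<in> Z" "z + s *\<^sub>R upv i \<in> Z" for z s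
      by (rule short_vertical_chords_if_thin[of Z "Kdual K i \<epsilon>", OF _ _ that])
        (use R(2,3) in \<open>auto simp: Z_def\<close>)
  qed (use eps in auto)
  finally show ?thesis using eps by (simp add: ennreal_le_iff)
qed

lemma exists_maximal_disjoint_subfamily:
  fixes R :: "'a \<Rightarrow> 'b set"
  assumes bound: "\<And>J. J \<subseteq> A \<Longrightarrow> finite J \<Longrightarrow> disjoint_family_on R J \<Longrightarrow> card J \<le> N"
  shows "\<exists>J\<subseteq>A. finite J \<and> disjoint_family_on R J \<and> (\<forall>a\<in>A. R a \<noteq> {} \<longrightarrow> (\<exists>b\<in>J. R a \<inter> R b \<noteq> {}))"
proof -
  define fam where "fam J \<longleftrightarrow> J \<subseteq> A \<and> finite J \<and> disjoint_family_on R J" for J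
  have "\<exists>J. fam J \<and> card J = 0" by (auto simp: fam_def disjoint_family_on_def intro!: exI[of _ "{}"])
  moreover have "\<forall>n'. (\<exists>J. fam J \<and> card J = n') \<longrightarrow> n' \<le> N" using bound by (auto simp: fam_def)
  ultimately have "\<exists>n. (\<exists>J. fam J \<and> card J = n) \<and> (\<forall>n'. (\<exists>J. fam J \<and> card J = n') \<longrightarrow> n' \<le> n)"
    by (rule Nat.ex_has_greatest_nat)
  then obtain J where J: "fam J" and max: "\<And>J'. fam J' \<Longrightarrow> card J' \<le> card J" by blast
  have "\<exists>b\<in>J. R a \<inter> R b \<noteq> {}" if "a \<in> A" "R a \<noteq> {}" for a
  proof (rule ccontr)
    assume none: "\<not> (\<exists>b\<in>J. R a \<inter> R b \<noteq> {})"
    then have "a \<notin> J" using that(2) by auto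
    moreover have "fam (insert a J)"
      using J that(1) none unfolding fam_def disjoint_family_on_def by (auto simp: Int_commute)
    ultimately show False using max[of "insert a J"] J by (simp add: fam_def)
  qed
  then show ?thesis using J unfolding fam_def by blast
qed

lemma exists_stabbing_set:
  fixes K :: "(real^'n::finite) set"
  assumes K: "compact K" "convex K" and eps: "\<epsilon> > 0" and t: "t > 0"
  defines "c \<equiv> (1/3)^CARD('n) * (1/(8*real CARD('n)))^CARD('n) * 2"
  shows "\<exists>P. P \<subseteq> ovbd i (Kdual K i \<epsilon>) \<and> finite P \<and> real (card P) \<le> 4 * 6 ^ (CARD('n) - 1) / c / t \<and>
           (\<forall>pH\<in>ovbd i (Kdual K i \<epsilon>). useful K i \<epsilon> pH \<and> large K i \<epsilon> t pH \<longrightarrow>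
              (\<exists>x\<in>P. x \<in> Cap i (Kdual K i \<epsilon>) \<epsilon> pH))"
proof -
  define caps where "caps = {pH \<in> ovbd i (Kdual K i \<epsilon>). useful K i \<epsilon> pH \<and> large K i \<epsilon> t pH}"
  have "\<exists>x R y. cap_witness K i \<epsilon> pH x R y \<and> ennreal (c * \<epsilon> * t) \<le> emeasure lebesgue R"
    if "pH \<in> caps" for pH
    using exists_cap_witness[OF K eps t] that unfolding caps_def c_def by auto
  then obtain x R y where wit: "\<And>pH. pH \<in> caps \<Longrightarrow> cap_witness K i \<epsilon> pH (x pH) (R pH) (y pH)"
    and vol: "\<And>pH. pH \<in> caps \<Longrightarrow> ennreal (c * \<epsilon> * t) \<le> emeasure lebesgue (R pH)"
    by metis
  have c: "c > 0" by (simp add: c_def)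
  have card_le: "real (card J) \<le> 4 * 6 ^ (CARD('n) - 1) / c / t"
    if "J \<subseteq> caps" "finite J" "disjoint_family_on R J" for J
    using card_disjoint_cap_witnesses_le[OF that(2,3), of K i \<epsilon> x y "c * \<epsilon> * t"] wit vol that(1) c eps t
    by (auto simp: field_simps subset_eq)
  obtain J where J: "J \<subseteq> caps" "finite J" "disjoint_family_on R J"
    and maximal: "\<And>a. a \<in> caps \<Longrightarrow> R a \<noteq> {} \<Longrightarrow> \<exists>b\<in>J. R a \<inter> R b \<noteq> {}"
    using exists_maximal_disjoint_subfamily[of caps R "nat \<lfloor>4 * 6 ^ (CARD('n) - 1) / c / t\<rfloor>"] card_le
    by (metis le_nat_floor of_nat_nat)
  have "R a \<noteq> {}" if "a \<in> caps" for a
    using vol[OF that] c eps t by (auto simp: not_le[symmetric])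
  then have "\<exists>b\<in>J. y b \<in> Cap i (Kdual K i \<epsilon>) \<epsilon> a" if "a \<in> caps" for a
    using maximal[OF that] cap_witness_stabs wit J(1) that by blast
  moreover have "y ` J \<subseteq> ovbd i (Kdual K i \<epsilon>)"
    using wit J(1) by (auto simp: cap_witness_def)
  moreover have "real (card (y ` J)) \<le> 4 * 6 ^ (CARD('n) - 1) / c / t"
    using card_image_le[OF J(2), of y] card_le[OF J] by linarith
  ultimately show ?thesis
    using J(2) unfolding caps_def by (intro exI[of _ "y ` J"]) blast
qed

theorem lemma13:
  "\<exists>C::real. \<forall>(K::(real^'n::finite) set) (\<epsilon>::real) (i::'n \<times> bool) (t::real).
     compact K \<and> convex K \<and> interior K \<noteq> {} \<and> \<epsilon> > 0 \<and> t > 0 \<longrightarrow>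
     (\<exists>P. P \<subseteq> ovbd i (Kdual K i \<epsilon>) \<and> finite P \<and> real (card P) \<le> C / t \<and>
        (\<forall>pH\<in>ovbd i (Kdual K i \<epsilon>). useful K i \<epsilon> pH \<and> large K i \<epsilon> t pH \<longrightarrow>
            (\<exists>x\<in>P. x \<in> Cap i (Kdual K i \<epsilon>) \<epsilon> pH)))"
  using exists_stabbing_set by blast

end
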